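(* Let $m,n\geq2$, let $\mathbf p\in\mathbb R^m$, $\mathbf q\in\mathbb R^n$ be probability vectors with all entries strictly positive, and let $y(\mathbf p,\mathbf q)=(p_1,\dots,p_{m-1},1,q_1,\dots,q_{n-1})^T$. Let $S_1,\dots,S_{C(m,n)}$, $C(m,n)=\binom{mn}{m+n-1}$, be the subsets of $[mn]$ of cardinality $m+n-1$ (in lexicographic order), and $\mathfrak A_k=\mathfrak A(S_k)$. When $\det(\mathfrak A_k)\neq0$ and $\mathfrak A_k^{-1}y(\mathbf p,\mathbf q)\in\mathcal P_{m+n-1}$, let $P_k$ be the $m\times n$ matrix with $(P_k)_{\phi(i_l)}=x_l$ for $S_k=\{i_1<\dots<i_{m+n-1}\}$ and $x=\mathfrak A_k^{-1}y(\mathbf p,\mathbf q)$, and all other entries $0$. Then $$\mathcal C_e(\mathbf p,\mathbf q)=\mathscr C(\mathbf p,\mathbf q)=\{P_k:\det(\mathfrak A_k)\neq0,\ \mathfrak A_k^{-1}y(\mathbf p,\mathbf q)\in\mathcal P_{m+n-1},\ 1\le k\le C(m,n)\}.$$ Moreover, for $H$ a strictly concave function on $\mathcal C(\mathbf p,\mathbf q)$ such as the Shannon, Rényi or Tsallis entropy, setting $H_k=H(P_k)$ if $\det(\mathfrak A_k)\neq0$ and $\mathfrak A_k^{-1}y(\mathbf p,\mathbf q)\in\mathcal P_{m+n-1}$, and $H_k=\infty$ otherwise, one has $$\inf_{P\in\mathcal C(\mathbf p,\mathbf q)}H(P)=\min_{P\in\mathscr C(\mathbf p,\mathbf q)}H(P)=\min\{H_k:1\le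 k\le C(m,n)\}.$$
   Context: $\mathcal P_N$ is the set of probability vectors in $\mathbb R^N$ (nonnegative entries summing to $1$). $\mathcal C(\mathbf p,\mathbf q)$: nonnegative $m\times n$ matrices with row sums $p_i$ and column sums $q_j$; $\mathcal C_e(\mathbf p,\mathbf q)$: its extreme points; $V(P)=\{(i,j):p_{i,j}\neq0\}$. $\mathscr C(\mathbf p,\mathbf q)$: the set of $P\in\mathcal C(\mathbf p,\mathbf q)$ with $V(P)\subset T$ for some tree $T\subset[m]\times[n]$ with $|T|=m+n-1$ (graph notions: distinct points adjacent iff they share a row or column; a circuit is a cyclic sequence of $s\ge4$ pairwise distinct points $v_k=(i_k,j_k)$ with, indices mod $s$, $v_k,v_{k+1}$ adjacent and $(i_{k+2}-i_k)(j_{k+2}-j_k)\ne0$; a tree is a connected subset with no circuit). $\phi(i)=(t,r)$ for $i=(t-1)n+r$, $t\in[m]$, $r\in[n]$. For $S=\{i_1<\dots<i_{m+n-1}\}$, the structure matrix $\mathfrak A(S)=(a_{s,k})$ is the $(m+n-1)\times(m+n-1)$ matrix with, for $\phi(i_k)=(t,r)$: $a_{s,k}=1$ if $s=t<m$; $a_{s,k}=1$ if $s=m$; $a_{s,k}=1$ if $s=m+r<m+n$; $a_{s,k}=0$ otherwise. Rényi entropy $\frac1{1-\alpha}\log\sum p_{i,j}^\alpha$ and Tsallis entropy $\frac1{1-\alpha}(\sum p_{i,j}^\alpha-1)$, $\alpha\ge0$, $\alpha\ne1$. *)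

theory Defs
  imports "Jordan_Normal_Form.Determinant" "Jordan_Normal_Form.Gauss_Jordan_Elimination"
    "HOL-Library.Extended_Real"
begin

text \<open>Matrices are functions nat => nat => real, indexed from 1 (rows 1..m, columns 1..n),
  required to vanish outside [m] x [n]. Vectors are functions nat => real indexed from 1.\<close>

type_synonym rmat = "nat \<Rightarrow> nat \<Rightarrow> real"

definition prob_vec :: "nat \<Rightarrow> (nat \<Rightarrow> real) \<Rightarrow> bool" where
  "prob_vec N p \<longleftrightarrow> (\<forall>i\<in>{1..N}. 0 \<le> p i) \<and> (\<Sum>i=1..N. p i) = 1"

definition coupling :: "nat \<Rightarrow> nat \<Rightarrow> (nat \<Rightarrow> real) \<Rightarrow> (nat \<Rightarrow> real) \<Rightarrow> rmat set" where
  "coupling m n p q = {P. (\<forall>i j. P i j \<noteq> 0 \<longrightarrow> i \<in> {1..m} \<and> j \<in> {1..n}) \<and>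
      (\<forall>i j. 0 \<le> P i j) \<and>
      (\<forall>i\<in>{1..m}. (\<Sum>j=1..n. P i j) = p i) \<and>
      (\<forall>j\<in>{1..n}. (\<Sum>i=1..m. P i j) = q j)}"

definition extreme_points :: "rmat set \<Rightarrow> rmat set" where
  "extreme_points S = {P \<in> S. \<not> (\<exists>Q\<in>S. \<exists>R\<in>S. Q \<noteq> R \<and>
      (\<exists>t::real. 0 < t \<and> t < 1 \<and> P = (\<lambda>i j. t * Q i j + (1 - t) * R i j)))}"

definition support :: "rmat \<Rightarrow> (nat \<times> nat) set" where
  "support P = {(i, j). P i j \<noteq> 0}"

definition adjacent :: "nat \<times> nat \<Rightarrow> nat \<times> nat \<Rightarrow> bool" where
  "adjacent u v \<longleftrightarrow> u \<noteq> v \<and> (fst u = fst v \<or> snd u = snd v)"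

definition has_circuit :: "(nat \<times> nat) set \<Rightarrow> bool" where
  "has_circuit T \<longleftrightarrow> (\<exists>s::nat. \<exists>v::nat \<Rightarrow> nat \<times> nat. 4 \<le> s \<and> inj_on v {..<s} \<and>
      (\<forall>k<s. v k \<in> T) \<and>
      (\<forall>k<s. adjacent (v k) (v ((k + 1) mod s))) \<and>
      (\<forall>k<s. (real (fst (v ((k + 2) mod s))) - real (fst (v k))) *
              (real (snd (v ((k + 2) mod s))) - real (snd (v k))) \<noteq> 0))"

definition connected_set :: "(nat \<times> nat) set \<Rightarrow> bool" where
  "connected_set T \<longleftrightarrow> (\<forall>u\<in>T. \<forall>v\<in>T. (\<lambda>a b. a \<in> T \<and> b \<in> T \<and> adjacent a b)\<^sup>*\<^sup>* u v)"

definition is_tree :: "(nat \<times> nat) set \<Rightarrow> bool" where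
  "is_tree T \<longleftrightarrow> connected_set T \<and> \<not> has_circuit T"

definition tree_couplings :: "nat \<Rightarrow> nat \<Rightarrow> (nat \<Rightarrow> real) \<Rightarrow> (nat \<Rightarrow> real) \<Rightarrow> rmat set" where
  "tree_couplings m n p q = {P \<in> coupling m n p q. \<exists>T. T \<subseteq> {1..m} \<times> {1..n} \<and> is_tree T \<and>
      card T = m + n - 1 \<and> support P \<subseteq> T}"

definition phi :: "nat \<Rightarrow> nat \<Rightarrow> nat \<times> nat" where
  "phi n i = ((i - 1) div n + 1, (i - 1) mod n + 1)"

definition elem :: "nat set \<Rightarrow> nat \<Rightarrow> nat" where
  "elem S k = sorted_list_of_set S ! (k - 1)"

definition struct_entry :: "nat \<Rightarrow> nat \<Rightarrow> nat set \<Rightarrow> nat \<Rightarrow> nat \<Rightarrow> real" where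
  "struct_entry m n S s k = (let (t, r) = phi n (elem S k) in
     if (s = t \<and> t < m) \<or> s = m \<or> (s = m + r \<and> m + r < m + n) then 1 else 0)"

definition struct_mat :: "nat \<Rightarrow> nat \<Rightarrow> nat set \<Rightarrow> real mat" where
  "struct_mat m n S = mat (m + n - 1) (m + n - 1) (\<lambda>(s, k). struct_entry m n S (s + 1) (k + 1))"

definition yvec :: "nat \<Rightarrow> nat \<Rightarrow> (nat \<Rightarrow> real) \<Rightarrow> (nat \<Rightarrow> real) \<Rightarrow> real vec" where
  "yvec m n p q = vec (m + n - 1) (\<lambda>s. if s + 1 < m then p (s + 1) else if s + 1 = m then 1
      else q (s + 1 - m))"

definition sol :: "nat \<Rightarrow> nat \<Rightarrow> (nat \<Rightarrow> real) \<Rightarrow> (nat \<Rightarrow> real) \<Rightarrow> nat set \<Rightarrow> real vec" where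
  "sol m n p q S = the (mat_inverse (struct_mat m n S)) *\<^sub>v yvec m n p q"

definition feasible :: "nat \<Rightarrow> nat \<Rightarrow> (nat \<Rightarrow> real) \<Rightarrow> (nat \<Rightarrow> real) \<Rightarrow> nat set \<Rightarrow> bool" where
  "feasible m n p q S \<longleftrightarrow> det (struct_mat m n S) \<noteq> 0 \<and>
      prob_vec (m + n - 1) (\<lambda>l. sol m n p q S $ (l - 1))"

definition P_of :: "nat \<Rightarrow> nat \<Rightarrow> (nat \<Rightarrow> real) \<Rightarrow> (nat \<Rightarrow> real) \<Rightarrow> nat set \<Rightarrow> rmat" where
  "P_of m n p q S = (\<lambda>i j. if \<exists>l\<in>{1..m + n - 1}. phi n (elem S l) = (i, j)
      then sol m n p q S $ ((THE l. l \<in> {1..m + n - 1} \<and> phi n (elem S l) = (i, j)) - 1) else 0)"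

definition index_sets :: "nat \<Rightarrow> nat \<Rightarrow> nat set set" where
  "index_sets m n = {S. S \<subseteq> {1..m * n} \<and> card S = m + n - 1}"

definition strictly_concave_on :: "rmat set \<Rightarrow> (rmat \<Rightarrow> real) \<Rightarrow> bool" where
  "strictly_concave_on C H \<longleftrightarrow> (\<forall>P\<in>C. \<forall>Q\<in>C. \<forall>t::real. P \<noteq> Q \<and> 0 < t \<and> t < 1 \<longrightarrow>
      H (\<lambda>i j. t * P i j + (1 - t) * Q i j) > t * H P + (1 - t) * H Q)"

definition H_k :: "nat \<Rightarrow> nat \<Rightarrow> (nat \<Rightarrow> real) \<Rightarrow> (nat \<Rightarrow> real) \<Rightarrow> (rmat \<Rightarrow> real) \<Rightarrow> nat set \<Rightarrow> ereal" where
  "H_k m n p q H S = (if feasible m n p q S then ereal (H (P_of m n p q S)) else \<infinity>)"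

end

theory Submission
  imports Defs
begin

(* A set F of cells is independent when the only weights on F with zero row and column sums
   vanish. For finite F this means that F contains no circuit: the signs (-1)^k along a circuit
   have zero margins, and a set without circuits has a cell alone in its row or column, which can
   be peeled off. A coupling is an extreme point iff its support is independent: a nonzero
   zero-margin direction on the support splits it into two couplings with smaller supports,
   while two couplings supported on one independent set coincide. Every independent subset of
   [m] x [n] extends to one with m + n - 1 cells, and such a set is connected by counting rows and
   columns, so it is a tree. The same splitting, together with strict concavity, moves any
   coupling to a tree coupling without increasing H. Finally the structure matrix of S computes
   the row sums, the total and the column sums of a weight on the cells phi(S); hence it is
   invertible iff phi(S) is independent, and then the solution of A x = y(p, q) lists the entries
   of the unique coupling supported on phi(S). *)

section \<open>Independent sets of cells\<close>

definition zero_margins :: "(nat \<times> nat) set \<Rightarrow> (nat \<times> nat \<Rightarrow> real) \<Rightarrow> bool" where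
  "zero_margins F x \<longleftrightarrow>
     (\<forall>i. (\<Sum>c\<in>{c\<in>F. fst c = i}. x c) = 0) \<and> (\<forall>j. (\<Sum>c\<in>{c\<in>F. snd c = j}. x c) = 0)"

text \<open>A set of cells is independent iff the corresponding columns of the constraint matrix of
  the transportation polytope (row sums and column sums) are linearly independent.\<close>
definition indep_cells :: "(nat \<times> nat) set \<Rightarrow> bool" where
  "indep_cells F \<longleftrightarrow> (\<forall>x. zero_margins F x \<longrightarrow> (\<forall>c\<in>F. x c = 0))"

definition leaf_cell :: "(nat \<times> nat) set \<Rightarrow> nat \<times> nat \<Rightarrow> bool" where
  "leaf_cell F l \<longleftrightarrow> (\<forall>d\<in>F - {l}. fst d \<noteq> fst l) \<or> (\<forall>d\<in>F - {l}. snd d \<noteq> snd l)"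

text \<open>A cell (i, j) is the edge between the row vertex Inl i and the column vertex Inr j of the
  complete bipartite graph; circuits of cells are the cycles of this graph.\<close>
definition edge_cell :: "nat + nat \<Rightarrow> nat + nat \<Rightarrow> nat \<times> nat" where
  "edge_cell a b = (if isl a then (projl a, projr b) else (projl b, projr a))"

lemma edge_cell_commute: "isl a \<noteq> isl b \<Longrightarrow> edge_cell a b = edge_cell b a"
  by (cases a; cases b) (auto simp: edge_cell_def)

lemma edge_cell_adjacent:
  "isl a \<noteq> isl b \<Longrightarrow> isl b \<noteq> isl c \<Longrightarrow> a \<noteq> c \<Longrightarrow> adjacent (edge_cell a b) (edge_cell b c)"
  by (cases a; cases b; cases c) (auto simp: edge_cell_def adjacent_def)

lemma edge_cell_apart:
  "isl a \<noteq> isl b \<Longrightarrow> isl b \<noteq> isl c \<Longrightarrow> isl c \<noteq> isl d \<Longrightarrow> a \<noteq> c \<Longrightarrow> b \<noteq> d \<Longrightarrow>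
   fst (edge_cell c d) \<noteq> fst (edge_cell a b) \<and> snd (edge_cell c d) \<noteq> snd (edge_cell a b)"
  by (cases a; cases b; cases c; cases d) (auto simp: edge_cell_def)

lemma edge_cell_inj:
  "isl a \<noteq> isl b \<Longrightarrow> isl c \<noteq> isl d \<Longrightarrow> edge_cell a b = edge_cell c d \<Longrightarrow>
   (a = c \<and> b = d) \<or> (a = d \<and> b = c)"
  by (cases a; cases b; cases c; cases d) (auto simp: edge_cell_def)

lemma has_circuit_mono: "has_circuit F \<Longrightarrow> F \<subseteq> G \<Longrightarrow> has_circuit G"
  unfolding has_circuit_def by blast

lemma has_circuit_if_bipartite_cycle:
  fixes Z :: "nat \<Rightarrow> nat + nat"
  assumes s4: "4 \<le> s" and per: "\<And>k. Z k = Z (k mod s)" and inj: "inj_on Z {..<s}"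
    and alt: "\<And>k. isl (Z (Suc k)) \<noteq> isl (Z k)"
    and edges: "\<And>k. k < s \<Longrightarrow> edge_cell (Z k) (Z (Suc k)) \<in> F"
  shows "has_circuit F"
proof -
  have Z_eq_iff: "Z i = Z j \<longleftrightarrow> i mod s = j mod s" for i j
  proof
    assume "Z i = Z j"
    then have "Z (i mod s) = Z (j mod s)" using per by metis
    then show "i mod s = j mod s" using inj s4 by (auto dest: inj_onD)
  qed (metis per)
  define v where "v k = edge_cell (Z k) (Z (Suc k))" for k
  have v_mod: "v (k mod s) = v k" for k
    unfolding v_def by (metis per mod_Suc_eq)
  have Z_ne: "Z k \<noteq> Z (k + 2)" for k
  proof
    assume "Z k = Z (k + 2)"
    then have "s dvd (k + 2) - k" using Z_eq_iff mod_eq_dvd_iff_nat[of k "k + 2" s] by simp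
    then show False using s4 dvd_imp_le[of s 2] by simp
  qed
  have "adjacent (v k) (v ((k + 1) mod s))" for k
    using edge_cell_adjacent[of "Z k" "Z (Suc k)" "Z (Suc (Suc k))"] alt[of k] alt[of "Suc k"]
      Z_ne[of k] by (simp only: v_mod) (simp add: v_def)
  moreover have "(real (fst (v ((k + 2) mod s))) - real (fst (v k))) *
      (real (snd (v ((k + 2) mod s))) - real (snd (v k))) \<noteq> 0" for k
    using edge_cell_apart[of "Z k" "Z (Suc k)" "Z (k + 2)" "Z (Suc (k + 2))"]
      Z_ne[of k] Z_ne[of "Suc k"] alt[of k] alt[of "Suc k"] alt[of "Suc (Suc k)"]
    by (simp only: v_mod) (simp add: v_def)
  moreover have "inj_on v {..<s}"
  proof (rule inj_onI)
    fix i j assume i: "i \<in> {..<s}" and j: "j \<in> {..<s}" and "v i = v j"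
    then have "(Z i = Z j \<and> Z (Suc i) = Z (Suc j)) \<or> (Z i = Z (Suc j) \<and> Z (Suc i) = Z j)"
      using edge_cell_inj alt unfolding v_def by metis
    then show "i = j"
    proof
      assume "Z i = Z j \<and> Z (Suc i) = Z (Suc j)"
      then show "i = j" using inj i j by (auto dest: inj_onD)
    next
      assume "Z i = Z (Suc j) \<and> Z (Suc i) = Z j"
      then have "i mod s = Suc j mod s" "Suc i mod s = j mod s" using Z_eq_iff by blast+
      then show "i = j" using i j s4 by (auto simp: mod_Suc split: if_splits)
    qed
  qed
  ultimately show ?thesis
    unfolding has_circuit_def using s4 edges by (auto simp: v_def intro!: exI[of _ s] exI[of _ v])
qed

text \<open>The first repetition in an alternating walk without backtracking closes a cycle.\<close>
lemma has_circuit_if_alternating_walk: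
  fixes U :: "nat \<Rightarrow> nat + nat"
  assumes fin: "finite (range U)" and alt: "\<And>k. isl (U k) \<longleftrightarrow> even k"
    and no_backtrack: "\<And>k. U (Suc (Suc k)) \<noteq> U k"
    and edges: "\<And>k. edge_cell (U k) (U (Suc k)) \<in> F"
  shows "has_circuit F"
proof -
  have "\<not> inj U" using fin finite_imageD by fastforce
  then have ex: "\<exists>b. \<exists>a<b. U a = U b" unfolding inj_def by (metis linorder_neqE_nat)
  define b where "b = (LEAST b. \<exists>a<b. U a = U b)"
  obtain a where ab: "a < b" "U a = U b" using LeastI_ex[OF ex] b_def by blast
  have inj: "inj_on U {..<b}"
  proof (rule inj_onI, rule ccontr)
    fix x y assume "x \<in> {..<b}" "y \<in> {..<b}" "U x = U y" "x \<noteq> y"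
    moreover have "b \<le> max x y"
      unfolding b_def using \<open>U x = U y\<close> \<open>x \<noteq> y\<close>
      by (intro Least_le) (metis linorder_neqE_nat max.strict_order_iff max.commute)
    ultimately show False by auto
  qed
  define s where "s = b - a"
  have "even a = even b" using ab alt by metis
  then have "even s" using ab(1) unfolding s_def by presburger
  moreover have "s \<noteq> 2"
  proof
    assume "s = 2"
    then have "b = Suc (Suc a)" using ab(1) by (simp add: s_def)
    then show False using ab(2) no_backtrack by metis
  qed
  ultimately have s4: "4 \<le> s" using ab(1) unfolding s_def by presburger
  define Z where "Z k = U (a + k mod s)" for k
  show ?thesis
  proof (rule has_circuit_if_bipartite_cycle[of s Z])
    show "Z k = Z (k mod s)" for k by (simp add: Z_def)
    show "inj_on Z {..<s}"
    proof (rule inj_onI)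
      fix x y assume "x \<in> {..<s}" "y \<in> {..<s}" "Z x = Z y"
      then have "U (a + x) = U (a + y)" "a + x \<in> {..<b}" "a + y \<in> {..<b}"
        by (auto simp: Z_def s_def)
      then show "x = y" using inj by (auto dest: inj_onD)
    qed
    show "isl (Z (Suc k)) \<noteq> isl (Z k)" for k
      using \<open>even s\<close> by (simp add: Z_def alt even_add dvd_mod_iff)
    show "edge_cell (Z k) (Z (Suc k)) \<in> F" if "k < s" for k
    proof -
      have "Z (Suc k) = U (Suc (a + k))"
      proof (cases "Suc k < s")
        case False
        then have "Suc k = s" using that by simp
        then have "Suc (a + k) = b" using ab(1) by (simp add: s_def)
        then show ?thesis using ab \<open>Suc k = s\<close> by (simp add: Z_def)
      qed (simp add: Z_def)
      then show ?thesis using that edges by (simp add: Z_def)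
    qed
  qed fact
qed

lemma has_circuit_if_no_leaf:
  assumes fin: "finite F" and "F \<noteq> {}" and no_leaf: "\<And>l. l \<in> F \<Longrightarrow> \<not> leaf_cell F l"
  shows "has_circuit F"
proof -
  obtain c0 where c0: "c0 \<in> F" using \<open>F \<noteq> {}\<close> by blast
  have "\<exists>d\<in>F. d \<noteq> c \<and> fst d = fst c" "\<exists>d\<in>F. d \<noteq> c \<and> snd d = snd c" if "c \<in> F" for c
    using no_leaf[OF that] unfolding leaf_cell_def by auto
  then obtain row_nb col_nb where
    row_nb: "\<And>c. c \<in> F \<Longrightarrow> row_nb c \<in> F \<and> row_nb c \<noteq> c \<and> fst (row_nb c) = fst c" and
    col_nb: "\<And>c. c \<in> F \<Longrightarrow> col_nb c \<in> F \<and> col_nb c \<noteq> c \<and> snd (col_nb c) = snd c"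
    by metis
  define w where "w = rec_nat c0 (\<lambda>k c. if even k then row_nb c else col_nb c)"
  have w0: "w 0 = c0" and wS: "w (Suc k) = (if even k then row_nb (w k) else col_nb (w k))" for k
    by (simp_all add: w_def)
  have wF: "w k \<in> F" for k by (induction k) (auto simp: w0 wS c0 row_nb col_nb)
  define U where "U k = (if even k then Inl (fst (w k)) else Inr (snd (w k)) :: nat + nat)" for k
  have U_edge: "edge_cell (U k) (U (Suc k)) = w (Suc k)" for k
    using row_nb[OF wF[of k]] col_nb[OF wF[of k]]
    by (cases "even k") (auto simp: U_def edge_cell_def wS prod_eq_iff)
  show ?thesis
  proof (rule has_circuit_if_alternating_walk[of U])
    have "range U \<subseteq> Inl ` fst ` F \<union> Inr ` snd ` F" using wF by (auto simp: U_def)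
    then show "finite (range U)" using fin finite_subset by blast
    show "isl (U k) \<longleftrightarrow> even k" for k by (simp add: U_def)
    show "U (Suc (Suc k)) \<noteq> U k" for k
    proof
      assume "U (Suc (Suc k)) = U k"
      then have "w (Suc (Suc k)) = w (Suc k)"
        using U_edge[of k] U_edge[of "Suc k"] edge_cell_commute by (simp add: U_def)
      then show False using row_nb[OF wF] col_nb[OF wF] wS by metis
    qed
    show "edge_cell (U k) (U (Suc k)) \<in> F" for k using U_edge wF by simp
  qed
qed

lemma leaf_cell_exists:
  "finite F \<Longrightarrow> F \<noteq> {} \<Longrightarrow> \<not> has_circuit F \<Longrightarrow> \<exists>l\<in>F. leaf_cell F l"
  using has_circuit_if_no_leaf by blast

lemma sum_eq_0_if_sign_reversing_involution:
  fixes f :: "'a \<Rightarrow> real"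
  assumes "finite A" "\<And>k. k \<in> A \<Longrightarrow> \<sigma> k \<in> A" "\<And>k. k \<in> A \<Longrightarrow> \<sigma> (\<sigma> k) = k"
    "\<And>k. k \<in> A \<Longrightarrow> f (\<sigma> k) = - f k"
  shows "sum f A = 0"
proof -
  have "sum f A = sum (\<lambda>k. f (\<sigma> k)) A"
    by (rule sum.reindex_bij_witness[where i = \<sigma> and j = \<sigma>]) (auto simp: assms)
  also have "\<dots> = - sum f A" by (simp add: assms sum_negf)
  finally show ?thesis by simp
qed

text \<open>Along a cyclic sequence of even length in which the steps staying on the same level of f
  alternate with the others, the positions on a given level pair up with opposite signs.\<close>
lemma alternating_sign_sum_eq_0:
  fixes f :: "nat \<Rightarrow> 'a"
  assumes s: "even s" "0 < s"
    and pair: "\<And>k. k < s \<Longrightarrow> E k \<Longrightarrow> f (Suc k mod s) = f k"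
    and alt: "\<And>k. k < s \<Longrightarrow> E (Suc k mod s) \<longleftrightarrow> \<not> E k"
  shows "(\<Sum>k | k < s \<and> f k = y. (-1::real) ^ k) = 0"
proof -
  define pred where "pred k = (k + s - 1) mod s" for k
  have pred_lt: "pred k < s" for k using s by (simp add: pred_def)
  have Suc_pred: "Suc (pred k) mod s = k" if "k < s" for k
    using that s by (cases k) (auto simp: pred_def mod_Suc)
  have pred_Suc: "pred (Suc k mod s) = k" if "k < s" for k
  proof (cases "Suc k < s")
    case False
    then have "Suc k = s" using that by simp
    then show ?thesis by (auto simp: pred_def)
  qed (simp add: pred_def)
  have sign_Suc: "(-1::real) ^ (Suc k mod s) = - ((-1) ^ k)" if "k < s" for k
  proof (cases "Suc k < s")
    case False
    then have "Suc k = s" using that by simp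
    then have "odd k" using s by presburger
    then show ?thesis using \<open>Suc k = s\<close> by simp
  qed simp
  have sign_pred: "(-1::real) ^ pred k = - ((-1) ^ k)" if "k < s" for k
    using sign_Suc[OF pred_lt[of k]] Suc_pred[OF that] by simp
  define \<sigma> where "\<sigma> k = (if E k then Suc k mod s else pred k)" for k
  show ?thesis
  proof (rule sum_eq_0_if_sign_reversing_involution[where \<sigma> = \<sigma>])
    fix k assume "k \<in> {k. k < s \<and> f k = y}"
    then have k: "k < s" "f k = y" by auto
    have E_pred: "E (pred k) \<longleftrightarrow> \<not> E k" using alt[OF pred_lt, of k] Suc_pred[OF k(1)] by simp
    show "\<sigma> k \<in> {k. k < s \<and> f k = y}"
      using pair[OF k(1)] pair[OF pred_lt, of k] E_pred Suc_pred[OF k(1)] k pred_lt s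
      by (auto simp: \<sigma>_def)
    show "\<sigma> (\<sigma> k) = k"
      using alt[OF k(1)] E_pred pred_Suc[OF k(1)] Suc_pred[OF k(1)] by (auto simp: \<sigma>_def)
    show "(-1) ^ \<sigma> k = - ((-1::real) ^ k)"
      using sign_Suc[OF k(1)] sign_pred[OF k(1)] by (simp add: \<sigma>_def)
  qed simp
qed

lemma not_indep_cells_if_has_circuit:
  assumes fin: "finite T" and "has_circuit T"
  shows "\<not> indep_cells T"
proof -
  obtain s :: nat and v :: "nat \<Rightarrow> nat \<times> nat" where s4: "4 \<le> s" and v_inj: "inj_on v {..<s}"
    and vT: "\<forall>k<s. v k \<in> T" and adj: "\<forall>k<s. adjacent (v k) (v ((k + 1) mod s))"
    and apart: "\<forall>k<s. (real (fst (v ((k + 2) mod s))) - real (fst (v k))) *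
              (real (snd (v ((k + 2) mod s))) - real (snd (v k))) \<noteq> 0"
    using \<open>has_circuit T\<close> unfolding has_circuit_def by blast
  define R where "R k \<longleftrightarrow> fst (v k) = fst (v (Suc k mod s))" for k
  have R_iff: "R k \<longleftrightarrow> snd (v k) \<noteq> snd (v (Suc k mod s))" if "k < s" for k
    using adj that unfolding adjacent_def R_def by (auto simp: prod_eq_iff)
  have R_alt: "R (Suc k mod s) \<longleftrightarrow> \<not> R k" if "k < s" for k
  proof -
    have "Suc (Suc k mod s) mod s = (k + 2) mod s" by (simp add: mod_Suc_eq)
    moreover have "Suc k mod s < s" using s4 by simp
    ultimately show ?thesis
      using R_iff[OF that] R_iff[of "Suc k mod s"] apart that unfolding R_def by auto
  qed
  have R_parity: "R k \<longleftrightarrow> (R 0 \<longleftrightarrow> even k)" if "k < s" for k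
    using that
  proof (induction k)
    case (Suc k)
    then show ?case using R_alt[of k] by simp
  qed simp
  have "even s"
  proof (rule ccontr)
    assume "odd s"
    then have "even (s - 1)" "Suc (s - 1) mod s = 0" using s4 by auto
    then show False using R_alt[of "s - 1"] R_parity[of "s - 1"] s4 by simp
  qed
  define x where
    "x c = (if c \<in> v ` {..<s} then (-1::real) ^ inv_into {..<s} v c else 0)" for c
  have sum_x: "(\<Sum>c\<in>{c\<in>T. P c}. x c) = (\<Sum>k | k < s \<and> P (v k). (-1) ^ k)" for P
  proof -
    have "(\<Sum>c\<in>{c\<in>T. P c}. x c) = (\<Sum>c\<in>v ` {k. k < s \<and> P (v k)}. x c)"
      using fin vT by (intro sum.mono_neutral_right) (auto simp: x_def)
    also have "\<dots> = (\<Sum>k | k < s \<and> P (v k). x (v k))"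
      by (rule sum.reindex[unfolded comp_def]) (auto intro: inj_on_subset[OF v_inj])
    also have "\<dots> = (\<Sum>k | k < s \<and> P (v k). (-1) ^ k)"
      using v_inj by (intro sum.cong) (auto simp: x_def)
    finally show ?thesis .
  qed
  have "zero_margins T x"
    unfolding zero_margins_def sum_x
    using alternating_sign_sum_eq_0[OF \<open>even s\<close>, of R "\<lambda>k. fst (v k)"]
      alternating_sign_sum_eq_0[OF \<open>even s\<close>, of "\<lambda>k. \<not> R k" "\<lambda>k. snd (v k)"]
      s4 R_alt R_iff by (auto simp: R_def)
  moreover have "v 0 \<in> T" "x (v 0) \<noteq> 0" using vT v_inj s4 by (auto simp: x_def)
  ultimately show ?thesis unfolding indep_cells_def by blast
qed

lemma indep_cells_insert_leaf:
  assumes fin: "finite G" and "l \<notin> G" and indep: "indep_cells G"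
    and leaf: "leaf_cell (insert l G) l"
  shows "indep_cells (insert l G)"
  unfolding indep_cells_def
proof (intro allI impI)
  fix x assume zm: "zero_margins (insert l G) x"
  have "x l = 0"
  proof (cases "\<forall>d\<in>G. fst d \<noteq> fst l")
    case True
    then have "{c \<in> insert l G. fst c = fst l} = {l}" by auto
    moreover have "(\<Sum>c\<in>{c \<in> insert l G. fst c = fst l}. x c) = 0"
      using zm unfolding zero_margins_def by blast
    ultimately show ?thesis by simp
  next
    case False
    then have "{c \<in> insert l G. snd c = snd l} = {l}"
      using leaf \<open>l \<notin> G\<close> by (auto simp: leaf_cell_def)
    moreover have "(\<Sum>c\<in>{c \<in> insert l G. snd c = snd l}. x c) = 0"
      using zm unfolding zero_margins_def by blast
    ultimately show ?thesis by simp
  qed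
  moreover have "(\<Sum>c\<in>{c \<in> insert l G. P c}. x c) = (\<Sum>c\<in>{c\<in>G. P c}. x c)" for P
  proof (cases "P l")
    case True
    then have "{c \<in> insert l G. P c} = insert l {c\<in>G. P c}" by auto
    then show ?thesis using fin \<open>l \<notin> G\<close> \<open>x l = 0\<close> by simp
  next
    case False
    then have "{c \<in> insert l G. P c} = {c\<in>G. P c}" by auto
    then show ?thesis by simp
  qed
  ultimately show "\<forall>c\<in>insert l G. x c = 0"
    using zm indep unfolding indep_cells_def zero_margins_def by simp
qed

lemma indep_cells_iff_no_circuit: "finite F \<Longrightarrow> indep_cells F \<longleftrightarrow> \<not> has_circuit F"
proof (induction "card F" arbitrary: F rule: less_induct)
  case less
  show ?case
  proof
    show "indep_cells F \<Longrightarrow> \<not> has_circuit F"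
      using not_indep_cells_if_has_circuit less.prems by blast
  next
    assume no_circ: "\<not> has_circuit F"
    show "indep_cells F"
    proof (cases "F = {}")
      case True
      then show ?thesis by (simp add: indep_cells_def)
    next
      case False
      then obtain l where l: "l \<in> F" "leaf_cell F l"
        using leaf_cell_exists less.prems no_circ by blast
      have "indep_cells (F - {l})"
        using less.hyps[of "F - {l}"] less.prems l(1) no_circ has_circuit_mono
        by (meson Diff_subset card_Diff1_less finite_Diff)
      then have "indep_cells (insert l (F - {l}))"
        using l less.prems by (intro indep_cells_insert_leaf) (auto simp: insert_absorb)
      then show ?thesis using l(1) by (simp add: insert_absorb)
    qed
  qed
qed

lemma indep_cells_subset: "finite F \<Longrightarrow> indep_cells F \<Longrightarrow> G \<subseteq> F \<Longrightarrow> indep_cells G"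
  by (meson finite_subset has_circuit_mono indep_cells_iff_no_circuit)

lemma indep_cells_card_le:
  "finite F \<Longrightarrow> F \<noteq> {} \<Longrightarrow> indep_cells F \<Longrightarrow> card F + 1 \<le> card (fst ` F) + card (snd ` F)"
proof (induction "card F" arbitrary: F rule: less_induct)
  case less
  obtain l where l: "l \<in> F" "leaf_cell F l"
    using leaf_cell_exists less.prems indep_cells_iff_no_circuit by blast
  define G where "G = F - {l}"
  show ?case
  proof (cases "G = {}")
    case True
    then have "F = {l}" using l by (auto simp: G_def)
    then show ?thesis by simp
  next
    case False
    have fin: "finite G" and card_F: "card F = card G + 1"
      using less.prems(1) card_Suc_Diff1[OF less.prems(1) l(1)] by (auto simp: G_def)
    have "indep_cells G"
      unfolding G_def by (rule indep_cells_subset[OF less.prems(1,3)]) auto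
    then have IH: "card G + 1 \<le> card (fst ` G) + card (snd ` G)"
      using less.hyps[OF _ fin False] card_F by simp
    have sub: "fst ` G \<subseteq> fst ` F" "snd ` G \<subseteq> snd ` F" by (auto simp: G_def)
    from l(2) have "(\<forall>d\<in>G. fst d \<noteq> fst l) \<or> (\<forall>d\<in>G. snd d \<noteq> snd l)"
      unfolding leaf_cell_def G_def .
    then have "fst l \<notin> fst ` G \<or> snd l \<notin> snd ` G" by auto
    then have "card (fst ` G) < card (fst ` F) \<or> card (snd ` G) < card (snd ` F)"
    proof (elim disjE)
      assume "fst l \<notin> fst ` G"
      then have "fst ` G \<subset> fst ` F" using sub l(1) by blast
      then show ?thesis using less.prems(1) by (simp add: psubset_card_mono)
    next
      assume "snd l \<notin> snd ` G"
      then have "snd ` G \<subset> snd ` F" using sub l(1) by blast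
      then show ?thesis using less.prems(1) by (simp add: psubset_card_mono)
    qed
    moreover have "card (fst ` G) \<le> card (fst ` F)" "card (snd ` G) \<le> card (snd ` F)"
      using sub less.prems(1) by (auto intro: card_mono)
    ultimately show ?thesis using IH card_F by linarith
  qed
qed

text \<open>Two parts of F sharing no row and no column would each need one more row or column than
  they have cells, which is too many in total.\<close>
lemma connected_set_if_indep_cells:
  assumes sub: "F \<subseteq> {1..m} \<times> {1..n}" and indep: "indep_cells F" and card_F: "card F = m + n - 1"
    and "1 \<le> m" "1 \<le> n"
  shows "connected_set F"
  unfolding connected_set_def
proof (intro ballI, rule ccontr)
  fix u v assume u: "u \<in> F" and v: "v \<in> F"
  define E where "E = (\<lambda>a b. a \<in> F \<and> b \<in> F \<and> adjacent a b)"
  assume "\<not> E\<^sup>*\<^sup>* u v"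
  define F1 where "F1 = {w\<in>F. E\<^sup>*\<^sup>* u w}"
  define F2 where "F2 = F - F1"
  have fin: "finite F" using sub finite_subset by blast
  have split: "F = F1 \<union> F2" "F1 \<inter> F2 = {}" "F1 \<subseteq> F" "F2 \<subseteq> F"
    by (auto simp: F1_def F2_def)
  have "u \<in> F1" "v \<in> F2" using u v \<open>\<not> E\<^sup>*\<^sup>* u v\<close> by (auto simp: F1_def F2_def)
  have apart: "fst a \<noteq> fst b \<and> snd a \<noteq> snd b" if "a \<in> F1" "b \<in> F2" for a b
  proof -
    have "\<not> E a b"
      using that rtranclp.rtrancl_into_rtrancl[of E u a b] by (auto simp: F1_def F2_def)
    then show ?thesis using that by (auto simp: E_def adjacent_def F1_def F2_def)
  qed
  have "card F1 + 1 \<le> card (fst ` F1) + card (snd ` F1)"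
    "card F2 + 1 \<le> card (fst ` F2) + card (snd ` F2)"
    using indep_cells_card_le indep_cells_subset[OF fin indep] split fin \<open>u \<in> F1\<close> \<open>v \<in> F2\<close>
    by (metis empty_iff finite_subset)+
  moreover have "card F = card F1 + card F2"
    using split fin by (metis card_Un_disjoint finite_Un)
  moreover have "card (fst ` F1) + card (fst ` F2) \<le> m"
  proof -
    have "card (fst ` F1) + card (fst ` F2) = card (fst ` F)"
      using apart fin split by (subst card_Un_disjoint[symmetric]) (auto simp: image_Un)
    also have "\<dots> \<le> card {1..m}" using sub by (intro card_mono) auto
    finally show ?thesis by simp
  qed
  moreover have "card (snd ` F1) + card (snd ` F2) \<le> n"
  proof -
    have "card (snd ` F1) + card (snd ` F2) = card (snd ` F)"
      using apart fin split by (subst card_Un_disjoint[symmetric]) (auto simp: image_Un)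
    also have "\<dots> \<le> card {1..n}" using sub by (intro card_mono) auto
    finally show ?thesis by simp
  qed
  ultimately show False using card_F \<open>1 \<le> m\<close> \<open>1 \<le> n\<close> by linarith
qed

lemma indep_cells_hook:
  assumes "finite C" and r0: "r0 \<in> R" and c0: "c0 \<in> C"
  shows "indep_cells ({r0} \<times> C \<union> R \<times> {c0})" (is "indep_cells ?H")
  unfolding indep_cells_def
proof (intro allI impI)
  fix x assume zm: "zero_margins ?H x"
  have row: "(\<Sum>d\<in>{d\<in>?H. fst d = r}. x d) = 0" and col: "(\<Sum>d\<in>{d\<in>?H. snd d = c}. x d) = 0"
    for r c using zm unfolding zero_margins_def by blast+
  have x_col: "x (r, c0) = 0" if "r \<noteq> r0" "r \<in> R" for r
  proof -
    have "{d\<in>?H. fst d = r} = {(r, c0)}" using that c0 by auto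
    then show ?thesis using row[of r] by simp
  qed
  have x_row: "x (r0, c) = 0" if "c \<noteq> c0" "c \<in> C" for c
  proof -
    have "{d\<in>?H. snd d = c} = {(r0, c)}" using that r0 by auto
    then show ?thesis using col[of c] by simp
  qed
  have "{d\<in>?H. fst d = r0} = {r0} \<times> C" using c0 by auto
  moreover have "sum x ({r0} \<times> C) = x (r0, c0) + (\<Sum>d\<in>{r0} \<times> C - {(r0, c0)}. x d)"
    using \<open>finite C\<close> c0 by (intro sum.remove) auto
  ultimately have "x (r0, c0) + (\<Sum>d\<in>{r0} \<times> C - {(r0, c0)}. x d) = 0"
    using row[of r0] by simp
  moreover have "(\<Sum>d\<in>{r0} \<times> C - {(r0, c0)}. x d) = 0" using x_row by (intro sum.neutral) auto
  ultimately have "x (r0, c0) = 0" by simp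
  then show "\<forall>d\<in>?H. x d = 0" using x_row x_col by (metis SigmaE Un_iff singletonD)
qed

lemma card_hook:
  assumes "finite R" "finite C" "r0 \<in> R" "c0 \<in> C"
  shows "card ({r0} \<times> C \<union> R \<times> {c0}) = card R + card C - 1"
proof -
  have "card ({r0} \<times> C \<union> R \<times> {c0}) + card ({r0} \<times> C \<inter> R \<times> {c0}) = card C + card R"
    using assms by (subst card_Un_Int[symmetric]) (auto simp: card_cartesian_product)
  moreover have "{r0} \<times> C \<inter> R \<times> {c0} = {(r0, c0)}" using assms by auto
  ultimately show ?thesis by simp
qed

lemma indep_cells_extend_hook:
  assumes "finite R" "finite C" "r \<in> R" "c \<in> C" "F \<subseteq> {r} \<times> C \<union> R \<times> {c}"
  shows "\<exists>T. F \<subseteq> T \<and> T \<subseteq> R \<times> C \<and> indep_cells T \<and> card T = card R + card C - 1"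
  using assms indep_cells_hook[OF assms(2-4)] card_hook[OF assms(1-4)]
  by (intro exI[of _ "{r} \<times> C \<union> R \<times> {c}"]) auto

text \<open>Remove a leaf l, extend by induction within R x C with the row (or column) of l removed,
  and put l back.\<close>
lemma indep_cells_extend:
  "finite R \<Longrightarrow> finite C \<Longrightarrow> R \<noteq> {} \<Longrightarrow> C \<noteq> {} \<Longrightarrow> F \<subseteq> R \<times> C \<Longrightarrow> indep_cells F \<Longrightarrow>
   \<exists>T. F \<subseteq> T \<and> T \<subseteq> R \<times> C \<and> indep_cells T \<and> card T = card R + card C - 1"
proof (induction "card R + card C" arbitrary: R C F rule: less_induct)
  case less
  note fin = less.prems(1,2) and sub = less.prems(5)
  obtain r0 c0 where r0: "r0 \<in> R" and c0: "c0 \<in> C" using less.prems(3,4) by blast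
  have card_pos: "card R > 0" "card C > 0" using fin less.prems(3,4) by (auto simp: card_gt_0_iff)
  show ?case
  proof (cases "F = {} \<or> card R = 1 \<or> card C = 1")
    case True
    then have "F \<subseteq> {r0} \<times> C \<union> R \<times> {c0}" using sub r0 c0 by (auto simp: card_1_singleton_iff)
    then show ?thesis using indep_cells_extend_hook[OF fin r0 c0] by blast
  next
    case False
    have fin_F: "finite F" using fin sub finite_subset by blast
    obtain l where l: "l \<in> F" "leaf_cell F l"
      using False leaf_cell_exists fin_F less.prems(6) indep_cells_iff_no_circuit by blast
    have indep': "indep_cells (F - {l})" using indep_cells_subset fin_F less.prems(6) by blast
    have l_RC: "fst l \<in> R" "snd l \<in> C" using l(1) sub by auto
    have add_leaf: "\<exists>T'. F \<subseteq> T' \<and> T' \<subseteq> R \<times> C \<and> indep_cells T' \<and> card T' = card R + card C - 1"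
      if "F - {l} \<subseteq> T" "T \<subseteq> R \<times> C" "indep_cells T" "card T = card R + card C - 2"
        "l \<notin> T" "leaf_cell (insert l T) l" for T
    proof -
      have "finite T" using that(2) fin finite_subset by blast
      then have "indep_cells (insert l T)" "card (insert l T) = card R + card C - 1"
        using that card_pos indep_cells_insert_leaf by auto
      then show ?thesis using that l(1) sub by (intro exI[of _ "insert l T"]) auto
    qed
    consider "\<forall>d\<in>F - {l}. fst d \<noteq> fst l" | "\<forall>d\<in>F - {l}. snd d \<noteq> snd l"
      using l(2) unfolding leaf_cell_def by blast
    then show ?thesis
    proof cases
      case 1
      let ?R = "R - {fst l}"
      have "R \<noteq> {fst l}" using False by auto
      then have card_R: "card ?R + 1 = card R" "?R \<noteq> {}"
        using fin l_RC card_Suc_Diff1[of R "fst l"] by auto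
      have "F - {l} \<subseteq> ?R \<times> C"
      proof
        fix d assume "d \<in> F - {l}"
        then have "fst d \<noteq> fst l" "d \<in> R \<times> C" using 1 sub by auto
        then show "d \<in> ?R \<times> C" by (cases d) auto
      qed
      moreover have "card ?R + card C < card R + card C" using card_R by simp
      ultimately obtain T where T: "F - {l} \<subseteq> T" "T \<subseteq> ?R \<times> C" "indep_cells T"
          "card T = card ?R + card C - 1"
        using less.hyps[OF _ finite_Diff[OF fin(1)] fin(2) card_R(2) less.prems(4) _ indep']
        by blast
      have "l \<notin> T" "\<forall>d\<in>T. fst d \<noteq> fst l" using T(2) by auto
      then have "leaf_cell (insert l T) l" by (simp add: leaf_cell_def)
      moreover have "T \<subseteq> R \<times> C" "card T = card R + card C - 2"
        using T(2,4) card_R card_pos by auto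
      ultimately show ?thesis using add_leaf[OF T(1) _ T(3)] \<open>l \<notin> T\<close> by blast
    next
      case 2
      let ?C = "C - {snd l}"
      have "C \<noteq> {snd l}" using False by auto
      then have card_C: "card ?C + 1 = card C" "?C \<noteq> {}"
        using fin l_RC card_Suc_Diff1[of C "snd l"] by auto
      have "F - {l} \<subseteq> R \<times> ?C"
      proof
        fix d assume "d \<in> F - {l}"
        then have "snd d \<noteq> snd l" "d \<in> R \<times> C" using 2 sub by auto
        then show "d \<in> R \<times> ?C" by (cases d) auto
      qed
      moreover have "card R + card ?C < card R + card C" using card_C by simp
      ultimately obtain T where T: "F - {l} \<subseteq> T" "T \<subseteq> R \<times> ?C" "indep_cells T"
          "card T = card R + card ?C - 1"
        using less.hyps[OF _ fin(1) finite_Diff[OF fin(2)] less.prems(3) card_C(2) _ indep']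
        by blast
      have "l \<notin> T" "\<forall>d\<in>T. snd d \<noteq> snd l" using T(2) by auto
      then have "leaf_cell (insert l T) l" by (simp add: leaf_cell_def)
      moreover have "T \<subseteq> R \<times> C" "card T = card R + card C - 2"
        using T(2,4) card_C card_pos by auto
      ultimately show ?thesis using add_leaf[OF T(1) _ T(3)] \<open>l \<notin> T\<close> by blast
    qed
  qed
qed

section \<open>Extreme points of the set of couplings\<close>

lemma support_coupling_subset: "P \<in> coupling m n p q \<Longrightarrow> support P \<subseteq> {1..m} \<times> {1..n}"
  by (auto simp: coupling_def support_def)

lemma finite_support_coupling: "P \<in> coupling m n p q \<Longrightarrow> finite (support P)"
  using finite_subset[OF support_coupling_subset] by blast

lemma row_sum_eq_sum_cells:
  assumes F: "F \<subseteq> {1..m} \<times> {1..n}" and supp: "support P \<subseteq> F"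
  shows "(\<Sum>j=1..n. P i j) = (\<Sum>c\<in>{c\<in>F. fst c = i}. case_prod P c)"
proof -
  have "(\<Sum>j=1..n. P i j) = (\<Sum>c\<in>Pair i ` {1..n}. case_prod P c)"
    by (simp add: sum.reindex inj_on_def)
  also have "\<dots> = (\<Sum>c\<in>{c\<in>F. fst c = i}. case_prod P c)"
  proof (rule sum.mono_neutral_right)
    show "{c\<in>F. fst c = i} \<subseteq> Pair i ` {1..n}" using F by force
    show "\<forall>c\<in>Pair i ` {1..n} - {c\<in>F. fst c = i}. case_prod P c = 0"
      using supp by (auto simp: support_def)
  qed simp
  finally show ?thesis .
qed

lemma col_sum_eq_sum_cells:
  assumes F: "F \<subseteq> {1..m} \<times> {1..n}" and supp: "support P \<subseteq> F"
  shows "(\<Sum>i=1..m. P i j) = (\<Sum>c\<in>{c\<in>F. snd c = j}. case_prod P c)"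
proof -
  have "(\<Sum>i=1..m. P i j) = (\<Sum>c\<in>(\<lambda>i. (i, j)) ` {1..m}. case_prod P c)"
    by (simp add: sum.reindex inj_on_def)
  also have "\<dots> = (\<Sum>c\<in>{c\<in>F. snd c = j}. case_prod P c)"
  proof (rule sum.mono_neutral_right)
    show "{c\<in>F. snd c = j} \<subseteq> (\<lambda>i. (i, j)) ` {1..m}" using F by force
    show "\<forall>c\<in>(\<lambda>i. (i, j)) ` {1..m} - {c\<in>F. snd c = j}. case_prod P c = 0"
      using supp by (auto simp: support_def)
  qed simp
  finally show ?thesis .
qed

lemma coupling_diff_zero_margins:
  assumes P: "P \<in> coupling m n p q" and Q: "Q \<in> coupling m n p q"
    and F: "F \<subseteq> {1..m} \<times> {1..n}" and "support P \<subseteq> F" "support Q \<subseteq> F"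
  shows "zero_margins F (\<lambda>c. case_prod P c - case_prod Q c)"
proof -
  have fin: "finite F" using F finite_subset by blast
  have "(\<Sum>c\<in>{c\<in>F. fst c = i}. case_prod P c - case_prod Q c) = 0" for i
  proof (cases "i \<in> {1..m}")
    case True
    then show ?thesis
      using row_sum_eq_sum_cells[OF F] assms fin by (simp add: sum_subtractf coupling_def)
  next
    case False
    then have "{c\<in>F. fst c = i} = {}" using F by auto
    then show ?thesis by (simp only: sum.empty)
  qed
  moreover have "(\<Sum>c\<in>{c\<in>F. snd c = j}. case_prod P c - case_prod Q c) = 0" for j
  proof (cases "j \<in> {1..n}")
    case True
    then show ?thesis
      using col_sum_eq_sum_cells[OF F] assms fin by (simp add: sum_subtractf coupling_def)
  next
    case False
    then have "{c\<in>F. snd c = j} = {}" using F by auto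
    then show ?thesis by (simp only: sum.empty)
  qed
  ultimately show ?thesis unfolding zero_margins_def by blast
qed

lemma coupling_add_zero_margins:
  assumes P: "P \<in> coupling m n p q" and supp: "support D \<subseteq> {1..m} \<times> {1..n}"
    and rows: "\<And>i. (\<Sum>j=1..n. D i j) = 0" and cols: "\<And>j. (\<Sum>i=1..m. D i j) = 0"
    and nonneg: "\<And>i j. 0 \<le> P i j + t * D i j"
  shows "(\<lambda>i j. P i j + t * D i j) \<in> coupling m n p q"
proof -
  have "i \<in> {1..m} \<and> j \<in> {1..n}" if "P i j + t * D i j \<noteq> 0" for i j
  proof -
    have "P i j \<noteq> 0 \<or> D i j \<noteq> 0" using that by auto
    then show ?thesis using P supp unfolding coupling_def support_def by auto
  qed
  moreover have "(\<Sum>j=1..n. P i j + t * D i j) = (\<Sum>j=1..n. P i j)" for i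
    using rows[of i] by (simp add: sum.distrib sum_distrib_left[symmetric])
  moreover have "(\<Sum>i=1..m. P i j + t * D i j) = (\<Sum>i=1..m. P i j)" for j
    using cols[of j] by (simp add: sum.distrib sum_distrib_left[symmetric])
  ultimately show ?thesis using P nonneg unfolding coupling_def by simp
qed

lemma pos_and_neg_if_sum_eq_0:
  fixes f :: "'a \<Rightarrow> real"
  assumes "finite A" "sum f A = 0" "c \<in> A" "f c \<noteq> 0"
  shows "\<exists>a\<in>A. 0 < f a" "\<exists>a\<in>A. f a < 0"
proof -
  have "\<not> (\<forall>a\<in>A. 0 \<le> g a)" if "sum g A = 0" "g c \<noteq> 0" for g :: "'a \<Rightarrow> real"
    using sum_nonneg_eq_0_iff[OF \<open>finite A\<close>, of g] that \<open>c \<in> A\<close> by blast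
  from this[of f] this[of "\<lambda>a. - f a"] assms(2,4)
  show "\<exists>a\<in>A. 0 < f a" "\<exists>a\<in>A. f a < 0" by (auto simp: sum_negf not_le)
qed

text \<open>The step length is the least ratio f c / - d c over the entries decreasing along d, as in
  the ratio test of the simplex method.\<close>
lemma max_step_to_boundary:
  fixes f d :: "'a \<Rightarrow> real"
  assumes fin: "finite S" and pos: "\<And>c. c \<in> S \<Longrightarrow> 0 < f c" and "a \<in> S" "d a < 0"
  obtains t b where "0 < t" "b \<in> S" "f b + t * d b = 0" "\<And>c. c \<in> S \<Longrightarrow> 0 \<le> f c + t * d c"
proof -
  define ratio where "ratio c = f c / - d c" for c
  define Neg where "Neg = {c\<in>S. d c < 0}"
  have "finite Neg" "a \<in> Neg" using fin assms(3,4) by (auto simp: Neg_def)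
  then have "Min (ratio ` Neg) \<in> ratio ` Neg" by (intro Min_in) auto
  then obtain b where b: "b \<in> Neg" "ratio b = Min (ratio ` Neg)" by auto
  have "b \<in> S" "d b < 0" using b(1) by (simp_all add: Neg_def)
  have "f b + ratio b * d b = 0" using \<open>d b < 0\<close> by (simp add: ratio_def)
  moreover have "0 < ratio b"
    using pos[OF \<open>b \<in> S\<close>] \<open>d b < 0\<close> by (simp add: ratio_def divide_pos_neg)
  moreover have "0 \<le> f c + ratio b * d c" if "c \<in> S" for c
  proof (cases "d c < 0")
    case True
    then have "ratio b \<le> f c / - d c" "0 < - d c"
      using b(2) \<open>finite Neg\<close> that by (auto simp: ratio_def Neg_def)
    then have "ratio b * - d c \<le> f c" by (simp only: pos_le_divide_eq)
    then show ?thesis by simp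
  next
    case False
    then show ?thesis using pos[OF that] \<open>0 < ratio b\<close> by simp
  qed
  ultimately show ?thesis using that \<open>b \<in> S\<close> by blast
qed

lemma coupling_step_to_boundary:
  assumes P: "P \<in> coupling m n p q" and supp_D: "support D \<subseteq> support P"
    and rows: "\<And>i. (\<Sum>j=1..n. D i j) = 0" and cols: "\<And>j. (\<Sum>i=1..m. D i j) = 0"
    and neg: "D i0 j0 < 0"
  obtains t c where "0 < t" "c \<in> support P" "(\<lambda>i j. P i j + t * D i j) \<in> coupling m n p q"
    "support (\<lambda>i j. P i j + t * D i j) \<subseteq> support P - {c}"
proof -
  define S where "S = support P"
  have S: "S \<subseteq> {1..m} \<times> {1..n}" "finite S"
    using support_coupling_subset[OF P] finite_support_coupling[OF P] by (simp_all add: S_def)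
  have P_nonneg: "0 \<le> P i j" for i j using P by (simp add: coupling_def)
  have P_pos: "0 < case_prod P c" if "c \<in> S" for c
    using that P_nonneg[of "fst c" "snd c"] by (auto simp: S_def support_def split_beta)
  have "(i0, j0) \<in> support D" using neg by (simp add: support_def)
  then have "(i0, j0) \<in> S" using supp_D by (auto simp: S_def)
  moreover have "case_prod D (i0, j0) < 0" using neg by simp
  ultimately obtain t c where t: "0 < t" "c \<in> S" "case_prod P c + t * case_prod D c = 0"
      "\<And>c. c \<in> S \<Longrightarrow> 0 \<le> case_prod P c + t * case_prod D c"
    using max_step_to_boundary[where f = "case_prod P" and d = "case_prod D", OF S(2) P_pos]
    by blast
  have D_zero: "D i j = 0" if "(i, j) \<notin> S" for i j
  proof (rule ccontr)
    assume "D i j \<noteq> 0"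
    then have "(i, j) \<in> support D" by (simp add: support_def)
    then show False using supp_D that by (auto simp: S_def)
  qed
  have "0 \<le> P i j + t * D i j" for i j
  proof (cases "(i, j) \<in> S")
    case True
    then show ?thesis using t(4)[OF True] by simp
  next
    case False
    then show ?thesis using P_nonneg[of i j] D_zero by simp
  qed
  then have "(\<lambda>i j. P i j + t * D i j) \<in> coupling m n p q"
    using supp_D S(1) rows cols by (intro coupling_add_zero_margins[OF P]) (auto simp: S_def)
  moreover have "support (\<lambda>i j. P i j + t * D i j) \<subseteq> S - {c}"
  proof
    fix d assume "d \<in> support (\<lambda>i j. P i j + t * D i j)"
    then obtain i j where d: "d = (i, j)" "P i j + t * D i j \<noteq> 0" by (auto simp: support_def)
    then have "(i, j) \<in> S" using D_zero by (auto simp: S_def support_def)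
    moreover have "(i, j) \<noteq> c" using d(2) t(3) by auto
    ultimately show "d \<in> S - {c}" using d(1) by simp
  qed
  ultimately show ?thesis using that t(1,2) unfolding S_def by blast
qed

text \<open>A nonzero direction with zero margins on the support of P can be followed both ways until
  an entry vanishes; P is a proper convex combination of the two endpoints.\<close>
lemma coupling_split_if_dependent_support:
  assumes P: "P \<in> coupling m n p q" and dep: "\<not> indep_cells (support P)"
  obtains Q R t where "Q \<in> coupling m n p q" "R \<in> coupling m n p q" "Q \<noteq> R" "0 < t" "t < 1"
    "P = (\<lambda>i j. t * Q i j + (1 - t) * R i j)"
    "card (support Q) < card (support P)" "card (support R) < card (support P)"
proof -
  define S where "S = support P"
  have S: "S \<subseteq> {1..m} \<times> {1..n}" "finite S"
    using support_coupling_subset[OF P] finite_support_coupling[OF P] by (simp_all add: S_def)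
  obtain x c0 where x: "zero_margins S x" and c0: "c0 \<in> S" "x c0 \<noteq> 0"
    using dep unfolding indep_cells_def S_def by blast
  define D where "D i j = (if (i, j) \<in> S then x (i, j) else 0)" for i j
  have supp_D: "support D \<subseteq> support P" "support (\<lambda>i j. - D i j) \<subseteq> support P"
    by (auto simp: support_def D_def S_def)
  have D_cells: "case_prod D c = x c" if "c \<in> S" for c using that by (auto simp: D_def split_beta)
  have D_margins: "(\<Sum>j=1..n. D i j) = 0" "(\<Sum>i=1..m. D i j) = 0" for i j
    using row_sum_eq_sum_cells[OF S(1) supp_D(1)[folded S_def]]
      col_sum_eq_sum_cells[OF S(1) supp_D(1)[folded S_def]] x D_cells
    by (simp_all add: zero_margins_def)
  then have D_neg_margins: "(\<Sum>j=1..n. - D i j) = 0" "(\<Sum>i=1..m. - D i j) = 0" for i j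
    by (simp_all add: sum_negf)
  have "finite {c\<in>S. fst c = fst c0}" "sum x {c\<in>S. fst c = fst c0} = 0" "c0 \<in> {c\<in>S. fst c = fst c0}"
    using S(2) x c0 by (auto simp: zero_margins_def)
  from pos_and_neg_if_sum_eq_0[OF this c0(2)]
  obtain cpos cneg where "cpos \<in> S" "0 < x cpos" "cneg \<in> S" "x cneg < 0" by blast
  then have "D (fst cneg) (snd cneg) < 0" "- D (fst cpos) (snd cpos) < 0" by (simp_all add: D_def)
  obtain t1 c1 where t1: "0 < t1" "c1 \<in> support P"
    and Q: "(\<lambda>i j. P i j + t1 * D i j) \<in> coupling m n p q"
      "support (\<lambda>i j. P i j + t1 * D i j) \<subseteq> support P - {c1}"
    by (rule coupling_step_to_boundary[OF P supp_D(1) D_margins \<open>D _ _ < 0\<close>])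
  obtain t2 c2 where t2: "0 < t2" "c2 \<in> support P"
    and R: "(\<lambda>i j. P i j + t2 * - D i j) \<in> coupling m n p q"
      "support (\<lambda>i j. P i j + t2 * - D i j) \<subseteq> support P - {c2}"
    by (rule coupling_step_to_boundary[OF P supp_D(2) D_neg_margins \<open>- D _ _ < 0\<close>])
  define Q where "Q i j = P i j + t1 * D i j" for i j
  define R where "R i j = P i j + t2 * - D i j" for i j
  have "Q \<noteq> R"
  proof
    assume "Q = R"
    then have "Q (fst c0) (snd c0) = R (fst c0) (snd c0)" by simp
    then have "(t1 + t2) * x c0 = 0" using c0(1) by (simp add: Q_def R_def D_def algebra_simps)
    then show False using c0(2) t1(1) t2(1) by simp
  qed
  define t where "t = t2 / (t1 + t2)"
  have "0 < t" "t < 1" using t1(1) t2(1) by (simp_all add: t_def)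
  have P_eq: "P = (\<lambda>i j. t * Q i j + (1 - t) * R i j)"
  proof (intro ext)
    fix i j
    have "t * Q i j + (1 - t) * R i j = P i j + (t * t1 - (1 - t) * t2) * D i j"
      by (simp add: Q_def R_def algebra_simps)
    also have "t * t1 - (1 - t) * t2 = 0" using t1(1) t2(1) by (simp add: t_def field_simps)
    finally show "P i j = t * Q i j + (1 - t) * R i j" by simp
  qed
  have fin: "finite (support P)" using S(2) by (simp add: S_def)
  have "card (support Q) \<le> card (support P - {c1})" "card (support R) \<le> card (support P - {c2})"
    using Q(2) R(2) fin unfolding Q_def[abs_def] R_def[abs_def] by (simp_all add: card_mono)
  moreover have "card (support P - {c1}) < card (support P)"
    "card (support P - {c2}) < card (support P)"
    using card_Diff1_less[OF fin t1(2)] card_Diff1_less[OF fin t2(2)] by simp_all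
  ultimately have "card (support Q) < card (support P)" "card (support R) < card (support P)"
    by linarith+
  moreover have "Q \<in> coupling m n p q" "R \<in> coupling m n p q"
    using Q(1) R(1) unfolding Q_def[abs_def] R_def[abs_def] by simp_all
  ultimately show ?thesis using that[OF _ _ \<open>Q \<noteq> R\<close> \<open>0 < t\<close> \<open>t < 1\<close> P_eq] by blast
qed

lemma is_tree_if_indep_cells:
  assumes "1 \<le> m" "1 \<le> n" "T \<subseteq> {1..m} \<times> {1..n}" "indep_cells T" "card T = m + n - 1"
  shows "is_tree T"
  using assms connected_set_if_indep_cells[OF assms(3-5)] finite_subset[OF assms(3)]
    indep_cells_iff_no_circuit[of T]
  unfolding is_tree_def by auto

lemma indep_cells_if_is_tree: "T \<subseteq> {1..m} \<times> {1..n} \<Longrightarrow> is_tree T \<Longrightarrow> indep_cells T"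
  using finite_subset[of T "{1..m} \<times> {1..n}"] by (simp add: is_tree_def indep_cells_iff_no_circuit)

lemma tree_coupling_if_indep_support:
  assumes "1 \<le> m" "1 \<le> n" and P: "P \<in> coupling m n p q" and "indep_cells (support P)"
  shows "P \<in> tree_couplings m n p q"
proof -
  obtain T where T: "support P \<subseteq> T" "T \<subseteq> {1..m} \<times> {1..n}" "indep_cells T"
      "card T = card {1..m} + card {1..n} - 1"
    using indep_cells_extend[of "{1..m}" "{1..n}" "support P"] support_coupling_subset[OF P] assms
    by auto
  then have "is_tree T" "card T = m + n - 1" using assms is_tree_if_indep_cells by auto
  then show ?thesis using P T(1,2) unfolding tree_couplings_def by blast
qed

lemma coupling_eq_if_indep_supports:
  assumes P: "P \<in> coupling m n p q" and Q: "Q \<in> coupling m n p q"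
    and T: "T \<subseteq> {1..m} \<times> {1..n}" "indep_cells T" and supp: "support P \<subseteq> T" "support Q \<subseteq> T"
  shows "P = Q"
proof (intro ext)
  fix i j
  have "zero_margins T (\<lambda>c. case_prod P c - case_prod Q c)"
    by (rule coupling_diff_zero_margins[OF P Q T(1) supp])
  then have "P i j = Q i j" if "(i, j) \<in> T" using T(2) that unfolding indep_cells_def by fastforce
  moreover have "P i j = 0" "Q i j = 0" if "(i, j) \<notin> T" using supp that by (auto simp: support_def)
  ultimately show "P i j = Q i j" by (cases "(i, j) \<in> T") simp_all
qed

lemma tree_couplings_subset_extreme_points:
  "tree_couplings m n p q \<subseteq> extreme_points (coupling m n p q)"
proof
  fix P assume "P \<in> tree_couplings m n p q"
  then obtain T where P: "P \<in> coupling m n p q" and T: "T \<subseteq> {1..m} \<times> {1..n}" "is_tree T"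
    and supp_P: "support P \<subseteq> T" unfolding tree_couplings_def by blast
  have no_split: "Q = R" if Q: "Q \<in> coupling m n p q" and R: "R \<in> coupling m n p q"
    and t: "0 < t" "t < 1" and P_eq: "P = (\<lambda>i j. t * Q i j + (1 - t) * R i j)" for Q R t
  proof -
    have "Q i j = 0 \<and> R i j = 0" if "(i, j) \<notin> T" for i j
    proof -
      have "t * Q i j + (1 - t) * R i j = 0" using supp_P that P_eq by (auto simp: support_def)
      moreover have "0 \<le> Q i j" "0 \<le> R i j" using Q R by (simp_all add: coupling_def)
      ultimately show ?thesis using t by (smt (verit) mult_pos_pos mult_nonneg_nonneg)
    qed
    then have "support Q \<subseteq> T" "support R \<subseteq> T" by (auto simp: support_def)
    then show "Q = R" using coupling_eq_if_indep_supports[OF Q R T(1)] indep_cells_if_is_tree T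
      by blast
  qed
  then show "P \<in> extreme_points (coupling m n p q)" using P unfolding extreme_points_def by blast
qed

lemma extreme_points_coupling_eq_tree_couplings:
  assumes "1 \<le> m" "1 \<le> n"
  shows "extreme_points (coupling m n p q) = tree_couplings m n p q"
proof
  show "extreme_points (coupling m n p q) \<subseteq> tree_couplings m n p q"
  proof
    fix P assume P: "P \<in> extreme_points (coupling m n p q)"
    then have "P \<in> coupling m n p q" by (simp add: extreme_points_def)
    moreover have "indep_cells (support P)"
    proof (rule ccontr)
      assume "\<not> indep_cells (support P)"
      with \<open>P \<in> coupling m n p q\<close> show False
        by (rule coupling_split_if_dependent_support) (use P in \<open>auto simp: extreme_points_def\<close>)
    qed
    ultimately show "P \<in> tree_couplings m n p q" using assms tree_coupling_if_indep_support by blast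
  qed
qed (rule tree_couplings_subset_extreme_points)

lemma strictly_concave_on_gt_min:
  assumes "strictly_concave_on C H" "Q \<in> C" "R \<in> C" "Q \<noteq> R" "0 < t" "t < 1"
  shows "min (H Q) (H R) < H (\<lambda>i j. t * Q i j + (1 - t) * R i j)"
proof -
  have "t * min (H Q) (H R) \<le> t * H Q" "(1 - t) * min (H Q) (H R) \<le> (1 - t) * H R"
    using assms(5,6) by (simp_all add: mult_left_mono)
  then have "min (H Q) (H R) \<le> t * H Q + (1 - t) * H R" by (simp add: algebra_simps)
  also have "\<dots> < H (\<lambda>i j. t * Q i j + (1 - t) * R i j)"
    using assms unfolding strictly_concave_on_def by blast
  finally show ?thesis .
qed

text \<open>Splitting a coupling with dependent support strictly shrinks the support, and one of the
  two parts has no larger value of H.\<close>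
lemma exists_tree_coupling_le:
  assumes "1 \<le> m" "1 \<le> n" and H: "strictly_concave_on (coupling m n p q) H"
  shows "P \<in> coupling m n p q \<Longrightarrow> \<exists>V\<in>tree_couplings m n p q. H V \<le> H P"
proof (induction "card (support P)" arbitrary: P rule: less_induct)
  case less
  show ?case
  proof (cases "indep_cells (support P)")
    case True
    then show ?thesis using tree_coupling_if_indep_support assms less.prems by blast
  next
    case False
    with less.prems obtain Q R t where QR: "Q \<in> coupling m n p q" "R \<in> coupling m n p q" "Q \<noteq> R"
      and t: "0 < t" "t < 1" and P_eq: "P = (\<lambda>i j. t * Q i j + (1 - t) * R i j)"
      and smaller: "card (support Q) < card (support P)" "card (support R) < card (support P)"
      by (rule coupling_split_if_dependent_support)
    have "min (H Q) (H R) < H P" unfolding P_eq by (rule strictly_concave_on_gt_min[OF H QR t])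
    moreover obtain VQ VR where V: "VQ \<in> tree_couplings m n p q" "VR \<in> tree_couplings m n p q"
      and "H VQ \<le> H Q" "H VR \<le> H R"
      using less.hyps[OF smaller(1) QR(1)] less.hyps[OF smaller(2) QR(2)] by blast
    ultimately have "H VQ \<le> H P \<or> H VR \<le> H P" by (cases "H Q \<le> H R") (simp_all add: min_def)
    then show ?thesis using V by blast
  qed
qed

lemma product_in_coupling:
  assumes "prob_vec m p" "prob_vec n q"
  shows "(\<lambda>i j. if i \<in> {1..m} \<and> j \<in> {1..n} then p i * q j else 0) \<in> coupling m n p q"
proof -
  have "(\<Sum>j=1..n. if i \<in> {1..m} \<and> j \<in> {1..n} then p i * q j else 0) = p i" if "i \<in> {1..m}" for i
    using that assms(2) by (simp add: prob_vec_def sum_distrib_left[symmetric])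
  moreover have "(\<Sum>i=1..m. if i \<in> {1..m} \<and> j \<in> {1..n} then p i * q j else 0) = q j"
    if "j \<in> {1..n}" for j
    using that assms(1) by (simp add: prob_vec_def sum_distrib_right[symmetric])
  ultimately show ?thesis using assms by (auto simp: coupling_def prob_vec_def)
qed

section \<open>The structure matrix\<close>

definition cell_index :: "nat \<Rightarrow> nat \<times> nat \<Rightarrow> nat" where
  "cell_index n c = (fst c - 1) * n + snd c"

lemma phi_in_cells:
  assumes "1 \<le> n" "i \<in> {1..m * n}" shows "phi n i \<in> {1..m} \<times> {1..n}"
proof -
  have "i - 1 < m * n" using assms by auto
  then have "(i - 1) div n < m" by (rule less_mult_imp_div_less)
  moreover have "(i - 1) mod n < n" using assms by simp
  ultimately show ?thesis by (auto simp: phi_def)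
qed

lemma phi_cell_index:
  assumes "c \<in> {1..m} \<times> {1..n}" shows "phi n (cell_index n c) = c"
proof -
  obtain t r where c: "c = (t, r)" "1 \<le> t" "1 \<le> r" "r \<le> n" using assms by auto
  have index: "cell_index n c - 1 = (t - 1) * n + (r - 1)" using c by (simp add: cell_index_def)
  have "r - 1 < n" using c by simp
  then have "((t - 1) * n + (r - 1)) div n = t - 1" "((t - 1) * n + (r - 1)) mod n = r - 1"
    by simp_all
  then show ?thesis unfolding phi_def index using c by simp
qed

lemma cell_index_phi: "1 \<le> i \<Longrightarrow> cell_index n (phi n i) = i"
  using div_mult_mod_eq[of "i - 1" n] by (simp add: cell_index_def phi_def)

lemma cell_index_in_range:
  assumes "c \<in> {1..m} \<times> {1..n}" shows "cell_index n c \<in> {1..m * n}"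
proof -
  obtain t r where c: "c = (t, r)" "1 \<le> t" "t \<le> m" "1 \<le> r" "r \<le> n" using assms by auto
  have "(t - 1) * n + r \<le> (m - 1) * n + n" using c by (intro add_mono mult_right_mono) auto
  also have "\<dots> = m * n" using c by (cases m) auto
  finally show ?thesis using c by (simp add: cell_index_def)
qed

text \<open>The cell of column k of the structure matrix; columns are numbered from 0 while the
  elements of S are numbered from 1.\<close>
definition struct_cell :: "nat \<Rightarrow> nat set \<Rightarrow> nat \<Rightarrow> nat \<times> nat" where
  "struct_cell n S k = phi n (elem S (Suc k))"

lemma bij_betw_struct_cell:
  assumes "S \<subseteq> {1..m * n}"
  shows "bij_betw (struct_cell n S) {..<card S} (phi n ` S)"
proof -
  have "finite S" using assms finite_subset by blast
  then have "bij_betw (\<lambda>k. elem S (Suc k)) {..<card S} S"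
    using bij_betw_nth[of "sorted_list_of_set S" "{..<card S}" S] by (simp add: elem_def)
  moreover have "inj_on (phi n) S"
    using assms cell_index_phi by (intro inj_on_inverseI[where g = "cell_index n"]) auto
  ultimately have "bij_betw (phi n \<circ> (\<lambda>k. elem S (Suc k))) {..<card S} (phi n ` S)"
    by (rule bij_betw_trans[OF _ inj_on_imp_bij_betw])
  moreover have "struct_cell n S = phi n \<circ> (\<lambda>k. elem S (Suc k))"
    by (simp add: fun_eq_iff struct_cell_def)
  ultimately show ?thesis by simp
qed

lemma card_phi_image: "S \<subseteq> {1..m * n} \<Longrightarrow> card (phi n ` S) = card S"
  using bij_betw_same_card[OF bij_betw_struct_cell] by simp

lemma phi_image_subset: "1 \<le> n \<Longrightarrow> S \<subseteq> {1..m * n} \<Longrightarrow> phi n ` S \<subseteq> {1..m} \<times> {1..n}"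
  using phi_in_cells by blast

lemma sum_struct_cells:
  assumes "S \<subseteq> {1..m * n}"
  shows "(\<Sum>k | k < card S \<and> Pr (struct_cell n S k). g (struct_cell n S k)) =
    (\<Sum>c\<in>{c\<in>phi n ` S. Pr c}. g c)"
proof -
  note bij = bij_betw_struct_cell[OF assms]
  have "inj_on (struct_cell n S) {k. k < card S \<and> Pr (struct_cell n S k)}"
    by (rule inj_on_subset[OF bij_betw_imp_inj_on[OF bij]]) auto
  moreover have "struct_cell n S ` {k. k < card S \<and> Pr (struct_cell n S k)} = {c\<in>phi n ` S. Pr c}"
    unfolding bij_betw_imp_surj_on[OF bij, symmetric] by auto
  ultimately have "bij_betw (struct_cell n S) {k. k < card S \<and> Pr (struct_cell n S k)}
      {c\<in>phi n ` S. Pr c}" by (simp add: bij_betw_def)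
  then show ?thesis by (rule sum.reindex_bij_betw)
qed

lemma struct_entry_Suc:
  assumes "Suc s < m + n"
  shows "struct_entry m n S (Suc s) (Suc k) =
    (if Suc s < m then of_bool (fst (struct_cell n S k) = Suc s)
     else if Suc s = m then 1 else of_bool (snd (struct_cell n S k) = Suc s - m))"
proof -
  obtain t r where "struct_cell n S k = (t, r)" by fastforce
  then show ?thesis using assms by (auto simp: struct_entry_def struct_cell_def)
qed

lemma sum_lessThan_filter: "(\<Sum>k | k < (N::nat) \<and> P k. f k) = (\<Sum>k<N. if P k then f k else 0)"
proof -
  have "{k. k < N \<and> P k} = {k\<in>{..<N}. P k}" by auto
  then show ?thesis by (simp only:) (rule sum.inter_filter, simp)
qed

lemma struct_mat_mult_vec_nth:
  assumes "v \<in> carrier_vec (m + n - 1)" and "s < m + n - 1"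
  shows "(struct_mat m n S *\<^sub>v v) $ s =
    (if Suc s < m then (\<Sum>k | k < m + n - 1 \<and> fst (struct_cell n S k) = Suc s. v $ k)
     else if Suc s = m then (\<Sum>k<m + n - 1. v $ k)
     else (\<Sum>k | k < m + n - 1 \<and> snd (struct_cell n S k) = Suc s - m. v $ k))"
proof -
  have "(struct_mat m n S *\<^sub>v v) $ s = (\<Sum>k<m + n - 1. struct_entry m n S (Suc s) (Suc k) * v $ k)"
    using assms by (simp add: struct_mat_def scalar_prod_def atLeast0LessThan)
  also have "\<dots> = (\<Sum>k<m + n - 1.
      if Suc s < m then (if fst (struct_cell n S k) = Suc s then v $ k else 0)
      else if Suc s = m then v $ k
      else (if snd (struct_cell n S k) = Suc s - m then v $ k else 0))"
    using assms(2) by (intro sum.cong) (simp_all add: struct_entry_Suc)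
  finally show ?thesis by (simp add: sum_lessThan_filter)
qed

text \<open>The right-hand side of the structure system for prescribed row sums a and column sums b:
  y(p, q) is the case where a = p sums to 1, and the homogeneous system is the case a = b = 0.\<close>
definition margin_vec :: "nat \<Rightarrow> nat \<Rightarrow> (nat \<Rightarrow> real) \<Rightarrow> (nat \<Rightarrow> real) \<Rightarrow> real vec" where
  "margin_vec m n a b = vec (m + n - 1)
     (\<lambda>s. if Suc s < m then a (Suc s) else if Suc s = m then (\<Sum>i=1..m. a i) else b (Suc s - m))"

lemma yvec_eq_margin_vec: "prob_vec m p \<Longrightarrow> yvec m n p q = margin_vec m n p q"
  by (auto simp: yvec_def margin_vec_def prob_vec_def intro!: eq_vecI)

lemma margin_vec_zero: "margin_vec m n (\<lambda>_. 0) (\<lambda>_. 0) = 0\<^sub>v (m + n - 1)"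
  by (auto simp: margin_vec_def)

lemma last_eq_if_sum_eq:
  fixes f g :: "nat \<Rightarrow> real"
  assumes "1 \<le> m" "\<And>i. 1 \<le> i \<Longrightarrow> i < m \<Longrightarrow> f i = g i" "(\<Sum>i=1..m. f i) = (\<Sum>i=1..m. g i)"
  shows "f m = g m"
proof -
  have "(\<Sum>i=1..<m. f i) = (\<Sum>i=1..<m. g i)" using assms(2) by (intro sum.cong) auto
  then show ?thesis using assms(3) sum.last_plus[OF assms(1), of f] sum.last_plus[OF assms(1), of g]
    by simp
qed

lemma struct_mat_mult_cells_nth:
  assumes S: "S \<subseteq> {1..m * n}" "card S = m + n - 1" and s: "s < m + n - 1"
  shows "(struct_mat m n S *\<^sub>v vec (m + n - 1) (\<lambda>k. g (struct_cell n S k))) $ s =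
    (if Suc s < m then (\<Sum>c\<in>{c\<in>phi n ` S. fst c = Suc s}. g c)
     else if Suc s = m then (\<Sum>c\<in>phi n ` S. g c)
     else (\<Sum>c\<in>{c\<in>phi n ` S. snd c = Suc s - m}. g c))"
proof -
  define N where "N = m + n - 1"
  define v where "v = vec N (\<lambda>k. g (struct_cell n S k))"
  have sum_v: "(\<Sum>k | k < N \<and> Pr (struct_cell n S k). v $ k) = (\<Sum>c\<in>{c\<in>phi n ` S. Pr c}. g c)"
    for Pr
  proof -
    have "(\<Sum>k | k < N \<and> Pr (struct_cell n S k). v $ k) =
        (\<Sum>k | k < N \<and> Pr (struct_cell n S k). g (struct_cell n S k))"
      by (rule sum.cong) (auto simp: v_def)
    then show ?thesis
      using sum_struct_cells[OF S(1), where Pr = Pr and g = g] S(2) by (simp add: N_def)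
  qed
  have "(\<Sum>k<N. v $ k) = (\<Sum>c\<in>phi n ` S. g c)" using sum_v[of "\<lambda>_. True"] by (simp add: lessThan_def)
  then show ?thesis
    using struct_mat_mult_vec_nth[of v m n s S, folded N_def] s
      sum_v[of "\<lambda>c. fst c = Suc s"] sum_v[of "\<lambda>c. snd c = Suc s - m"]
    by (simp add: v_def N_def)
qed

text \<open>The structure matrix does not compute the sums of row m and of column n; they follow from
  the total.\<close>
lemma struct_mat_mult_eq_margin_vec_iff:
  assumes n: "1 \<le> n" and m: "1 \<le> m" and S: "S \<subseteq> {1..m * n}" "card S = m + n - 1"
    and ab: "(\<Sum>i=1..m. a i) = (\<Sum>j=1..n. b j)"
  shows "struct_mat m n S *\<^sub>v vec (m + n - 1) (\<lambda>k. g (struct_cell n S k)) = margin_vec m n a b \<longleftrightarrow>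
    (\<forall>i\<in>{1..m}. (\<Sum>c\<in>{c\<in>phi n ` S. fst c = i}. g c) = a i) \<and>
    (\<forall>j\<in>{1..n}. (\<Sum>c\<in>{c\<in>phi n ` S. snd c = j}. g c) = b j)"
proof -
  define N where "N = m + n - 1"
  define T where "T = phi n ` S"
  define v where "v = vec N (\<lambda>k. g (struct_cell n S k))"
  define row where "row i = (\<Sum>c\<in>{c\<in>T. fst c = i}. g c)" for i
  define col where "col j = (\<Sum>c\<in>{c\<in>T. snd c = j}. g c)" for j
  have T: "T \<subseteq> {1..m} \<times> {1..n}" "finite T"
    using phi_image_subset[OF n S(1)] finite_subset[OF S(1)] by (auto simp: T_def)
  have rows_total: "(\<Sum>c\<in>T. g c) = (\<Sum>i=1..m. row i)"
    unfolding row_def using T by (intro sum.group[symmetric]) auto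
  have cols_total: "(\<Sum>c\<in>T. g c) = (\<Sum>j=1..n. col j)"
    unfolding col_def using T by (intro sum.group[symmetric]) auto
  have entry: "(struct_mat m n S *\<^sub>v v) $ s =
      (if Suc s < m then row (Suc s) else if Suc s = m then (\<Sum>c\<in>T. g c) else col (Suc s - m))"
    if "s < N" for s
    using struct_mat_mult_cells_nth[OF S that[unfolded N_def], of g]
    by (simp add: v_def N_def row_def col_def T_def)
  have margin: "margin_vec m n a b $ s =
      (if Suc s < m then a (Suc s) else if Suc s = m then (\<Sum>i=1..m. a i) else b (Suc s - m))"
    if "s < N" for s
    using that by (simp add: margin_vec_def N_def)
  have "struct_mat m n S *\<^sub>v v = margin_vec m n a b \<longleftrightarrow>
      (\<forall>s<N. (struct_mat m n S *\<^sub>v v) $ s = margin_vec m n a b $ s)"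
    by (auto simp: vec_eq_iff struct_mat_def margin_vec_def N_def)
  also have "\<dots> \<longleftrightarrow> (\<forall>i\<in>{1..m}. row i = a i) \<and> (\<forall>j\<in>{1..n}. col j = b j)"
  proof
    assume eq: "\<forall>s<N. (struct_mat m n S *\<^sub>v v) $ s = margin_vec m n a b $ s"
    have row_lt: "row i = a i" if "1 \<le> i" "i < m" for i
      using eq entry[of "i - 1"] margin[of "i - 1"] that by (simp add: N_def)
    have col_lt: "col j = b j" if "1 \<le> j" "j < n" for j
      using eq entry[of "m + j - 1"] margin[of "m + j - 1"] that m by (simp add: N_def)
    have total_eq: "(\<Sum>c\<in>T. g c) = (\<Sum>i=1..m. a i)"
      using eq entry[of "m - 1"] margin[of "m - 1"] m n by (simp add: N_def)
    have "(\<Sum>i=1..m. row i) = (\<Sum>i=1..m. a i)" using rows_total total_eq by simp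
    then have "row m = a m" using last_eq_if_sum_eq[of m row a] m row_lt by blast
    have "(\<Sum>j=1..n. col j) = (\<Sum>j=1..n. b j)" using cols_total total_eq ab by simp
    then have "col n = b n" using last_eq_if_sum_eq[of n col b] n col_lt by blast
    have "row i = a i" if "i \<in> {1..m}" for i
      using that row_lt \<open>row m = a m\<close> by (cases "i < m") auto
    moreover have "col j = b j" if "j \<in> {1..n}" for j
      using that col_lt \<open>col n = b n\<close> by (cases "j < n") auto
    ultimately show "(\<forall>i\<in>{1..m}. row i = a i) \<and> (\<forall>j\<in>{1..n}. col j = b j)" by blast
  next
    assume rc: "(\<forall>i\<in>{1..m}. row i = a i) \<and> (\<forall>j\<in>{1..n}. col j = b j)"
    show "\<forall>s<N. (struct_mat m n S *\<^sub>v v) $ s = margin_vec m n a b $ s"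
    proof (intro allI impI)
      fix s assume "s < N"
      consider "Suc s < m" | "Suc s = m" | "m < Suc s" by linarith
      then show "(struct_mat m n S *\<^sub>v v) $ s = margin_vec m n a b $ s"
      proof cases
        case 1
        then show ?thesis using entry[OF \<open>s < N\<close>] margin[OF \<open>s < N\<close>] rc by simp
      next
        case 2
        have "(\<Sum>i=1..m. row i) = (\<Sum>i=1..m. a i)" using rc by (intro sum.cong) auto
        then show ?thesis using 2 entry[OF \<open>s < N\<close>] margin[OF \<open>s < N\<close>] rows_total by simp
      next
        case 3
        then have "Suc s - m \<in> {1..n}" using \<open>s < N\<close> by (auto simp: N_def)
        then show ?thesis using 3 entry[OF \<open>s < N\<close>] margin[OF \<open>s < N\<close>] rc by simp
      qed
    qed
  qed
  finally show ?thesis unfolding v_def N_def row_def col_def T_def .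
qed

lemma zero_margins_iff:
  assumes "T \<subseteq> {1..m} \<times> {1..n}"
  shows "zero_margins T g \<longleftrightarrow> (\<forall>i\<in>{1..m}. (\<Sum>c\<in>{c\<in>T. fst c = i}. g c) = 0) \<and>
    (\<forall>j\<in>{1..n}. (\<Sum>c\<in>{c\<in>T. snd c = j}. g c) = 0)"
proof -
  have "(\<Sum>c\<in>{c\<in>T. fst c = i}. g c) = 0" if "i \<notin> {1..m}" for i
  proof -
    have "{c\<in>T. fst c = i} = {}" using assms that by auto
    then show ?thesis by (simp only: sum.empty)
  qed
  moreover have "(\<Sum>c\<in>{c\<in>T. snd c = j}. g c) = 0" if "j \<notin> {1..n}" for j
  proof -
    have "{c\<in>T. snd c = j} = {}" using assms that by auto
    then show ?thesis by (simp only: sum.empty)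
  qed
  ultimately show ?thesis unfolding zero_margins_def by blast
qed

lemma det_struct_mat_nonzero_iff:
  assumes n: "1 \<le> n" and m: "1 \<le> m" and S: "S \<subseteq> {1..m * n}" "card S = m + n - 1"
  shows "det (struct_mat m n S) \<noteq> 0 \<longleftrightarrow> indep_cells (phi n ` S)"
proof -
  define N where "N = m + n - 1"
  define T where "T = phi n ` S"
  define cell where "cell = struct_cell n S"
  have bij: "bij_betw cell {..<N} T"
    using bij_betw_struct_cell[OF S(1)] S(2) by (simp add: N_def T_def cell_def)
  have kernel: "struct_mat m n S *\<^sub>v vec N (\<lambda>k. g (cell k)) = 0\<^sub>v N \<longleftrightarrow> zero_margins T g" for g
    using struct_mat_mult_eq_margin_vec_iff[OF n m S, of "\<lambda>_. 0" "\<lambda>_. 0" g]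
      zero_margins_iff[OF phi_image_subset[OF n S(1)]]
    by (simp add: margin_vec_zero N_def T_def cell_def)
  have vec_zero: "vec N (\<lambda>k. g (cell k)) = 0\<^sub>v N \<longleftrightarrow> (\<forall>c\<in>T. g c = 0)" for g
    using bij_betw_imp_surj_on[OF bij] by (auto simp: vec_eq_iff)
  have vec_of_cells: "v = vec N (\<lambda>k. v $ the_inv_into {..<N} cell (cell k))"
    if "v \<in> carrier_vec N" for v
    using that the_inv_into_f_f[OF bij_betw_imp_inj_on[OF bij]] by (auto simp: vec_eq_iff)
  have "det (struct_mat m n S) = 0 \<longleftrightarrow>
      (\<exists>v. v \<in> carrier_vec N \<and> v \<noteq> 0\<^sub>v N \<and> struct_mat m n S *\<^sub>v v = 0\<^sub>v N)"
    by (rule det_0_iff_vec_prod_zero) (simp add: struct_mat_def N_def)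
  also have "\<dots> \<longleftrightarrow> (\<exists>g. zero_margins T g \<and> \<not> (\<forall>c\<in>T. g c = 0))"
  proof
    assume "\<exists>v. v \<in> carrier_vec N \<and> v \<noteq> 0\<^sub>v N \<and> struct_mat m n S *\<^sub>v v = 0\<^sub>v N"
    then obtain v where v: "v \<in> carrier_vec N" "v \<noteq> 0\<^sub>v N" "struct_mat m n S *\<^sub>v v = 0\<^sub>v N"
      by blast
    define g where "g c = v $ the_inv_into {..<N} cell c" for c
    have v_eq: "vec N (\<lambda>k. g (cell k)) = v" using vec_of_cells[OF v(1)] by (simp add: g_def)
    have "zero_margins T g" using kernel[of g] v(3) unfolding v_eq by blast
    moreover have "\<not> (\<forall>c\<in>T. g c = 0)" using vec_zero[of g] v(2) unfolding v_eq by blast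
    ultimately show "\<exists>g. zero_margins T g \<and> \<not> (\<forall>c\<in>T. g c = 0)" by blast
  next
    assume "\<exists>g. zero_margins T g \<and> \<not> (\<forall>c\<in>T. g c = 0)"
    then obtain g where "zero_margins T g" "\<not> (\<forall>c\<in>T. g c = 0)" by blast
    then show "\<exists>v. v \<in> carrier_vec N \<and> v \<noteq> 0\<^sub>v N \<and> struct_mat m n S *\<^sub>v v = 0\<^sub>v N"
      using kernel vec_zero by (intro exI[of _ "vec N (\<lambda>k. g (cell k))"]) auto
  qed
  finally show ?thesis unfolding indep_cells_def T_def by blast
qed

lemma mat_inverse_if_det_nonzero:
  assumes A: "A \<in> carrier_mat N N" and "det A \<noteq> (0 :: 'a :: field)"
  obtains B where "mat_inverse A = Some B" "A * B = 1\<^sub>m N" "B * A = 1\<^sub>m N" "B \<in> carrier_mat N N"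
proof -
  have "mat_inverse A \<noteq> None"
    using mat_inverse(1)[OF A, where b = "()"] det_non_zero_imp_unit[OF assms, where b = "()"]
    by blast
  then obtain B where "mat_inverse A = Some B" by blast
  with mat_inverse(2)[OF A this] that show ?thesis by blast
qed

lemma sol_eq_iff:
  assumes det: "det (struct_mat m n S) \<noteq> 0" and x: "x \<in> carrier_vec (m + n - 1)"
  shows "sol m n p q S = x \<longleftrightarrow> struct_mat m n S *\<^sub>v x = yvec m n p q"
proof -
  have A: "struct_mat m n S \<in> carrier_mat (m + n - 1) (m + n - 1)" by (simp add: struct_mat_def)
  obtain B where B: "mat_inverse (struct_mat m n S) = Some B"
    "struct_mat m n S * B = 1\<^sub>m (m + n - 1)" "B * struct_mat m n S = 1\<^sub>m (m + n - 1)"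
    "B \<in> carrier_mat (m + n - 1) (m + n - 1)"
    using mat_inverse_if_det_nonzero[OF A det] by blast
  have y: "yvec m n p q \<in> carrier_vec (m + n - 1)" by (simp add: yvec_def)
  show ?thesis
  proof
    assume "sol m n p q S = x"
    then have "struct_mat m n S *\<^sub>v x = (struct_mat m n S * B) *\<^sub>v yvec m n p q"
      using assoc_mult_mat_vec[OF A B(4) y] by (simp add: sol_def B(1))
    then show "struct_mat m n S *\<^sub>v x = yvec m n p q" using B(2) y by simp
  next
    assume "struct_mat m n S *\<^sub>v x = yvec m n p q"
    then have "sol m n p q S = (B * struct_mat m n S) *\<^sub>v x"
      using assoc_mult_mat_vec[OF B(4) A x] by (simp add: sol_def B(1))
    then show "sol m n p q S = x" using B(3) x by simp
  qed
qed

lemma sol_carrier: "det (struct_mat m n S) \<noteq> 0 \<Longrightarrow> sol m n p q S \<in> carrier_vec (m + n - 1)"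
  by (rule mat_inverse_if_det_nonzero[of "struct_mat m n S" "m + n - 1"])
    (auto simp: struct_mat_def sol_def yvec_def)

lemma P_of_struct_cell:
  assumes S: "S \<subseteq> {1..m * n}" "card S = m + n - 1" and k: "k < m + n - 1"
  shows "P_of m n p q S (fst (struct_cell n S k)) (snd (struct_cell n S k)) = sol m n p q S $ k"
proof -
  let ?c = "(fst (struct_cell n S k), snd (struct_cell n S k))"
  have inj: "inj_on (struct_cell n S) {..<m + n - 1}"
    using bij_betw_imp_inj_on[OF bij_betw_struct_cell[OF S(1)]] S(2) by simp
  have "(THE l. l \<in> {1..m + n - 1} \<and> phi n (elem S l) = ?c) = Suc k"
  proof (rule the_equality)
    show "Suc k \<in> {1..m + n - 1} \<and> phi n (elem S (Suc k)) = ?c"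
      using k by (simp add: struct_cell_def)
  next
    fix l assume l: "l \<in> {1..m + n - 1} \<and> phi n (elem S l) = ?c"
    then obtain l' where l': "l = Suc l'" "l' < m + n - 1" by (cases l) auto
    then have "struct_cell n S l' = struct_cell n S k" using l by (simp add: struct_cell_def)
    then show "l = Suc k" using inj_onD[OF inj] l' k by auto
  qed
  then show ?thesis using k unfolding P_of_def by (auto simp: struct_cell_def)
qed

lemma P_of_outside:
  assumes S: "S \<subseteq> {1..m * n}" "card S = m + n - 1" and "(i, j) \<notin> phi n ` S"
  shows "P_of m n p q S i j = 0"
proof -
  have "phi n (elem S l) \<noteq> (i, j)" if l: "l \<in> {1..m + n - 1}" for l
  proof -
    obtain k where "l = Suc k" "k < card S" using l S(2) by (cases l) auto
    then have "phi n (elem S l) \<in> phi n ` S"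
      using bij_betw_imp_surj_on[OF bij_betw_struct_cell[OF S(1)]] by (auto simp: struct_cell_def)
    then show ?thesis using assms(3) by auto
  qed
  then show ?thesis unfolding P_of_def by auto
qed

section \<open>Tree couplings as solutions of the structure system\<close>

lemma struct_cell_cases:
  assumes "S \<subseteq> {1..m * n}" "c \<in> phi n ` S"
  obtains k where "k < card S" "c = struct_cell n S k"
  using bij_betw_imp_surj_on[OF bij_betw_struct_cell[OF assms(1)]] assms(2) by blast

lemma feasible_and_P_of_eq_if_coupling:
  assumes n: "1 \<le> n" and m: "1 \<le> m" and pq: "prob_vec m p" "prob_vec n q"
    and S: "S \<subseteq> {1..m * n}" "card S = m + n - 1" and det: "det (struct_mat m n S) \<noteq> 0"
    and P: "P \<in> coupling m n p q" and supp: "support P \<subseteq> phi n ` S"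
  shows "feasible m n p q S \<and> P_of m n p q S = P"
proof -
  define N where "N = m + n - 1"
  define T where "T = phi n ` S"
  define x where "x = vec N (\<lambda>k. case_prod P (struct_cell n S k))"
  have x: "x \<in> carrier_vec (m + n - 1)" by (simp add: x_def N_def)
  have T: "T \<subseteq> {1..m} \<times> {1..n}" using phi_image_subset[OF n S(1)] by (simp add: T_def)
  have "(\<Sum>i=1..m. p i) = (\<Sum>j=1..n. q j)" using pq by (simp add: prob_vec_def)
  moreover have "\<forall>i\<in>{1..m}. (\<Sum>c\<in>{c\<in>T. fst c = i}. case_prod P c) = p i"
    using row_sum_eq_sum_cells[OF T supp[folded T_def]] P by (simp add: coupling_def)
  moreover have "\<forall>j\<in>{1..n}. (\<Sum>c\<in>{c\<in>T. snd c = j}. case_prod P c) = q j"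
    using col_sum_eq_sum_cells[OF T supp[folded T_def]] P by (simp add: coupling_def)
  ultimately have Ax: "struct_mat m n S *\<^sub>v x = yvec m n p q"
    using struct_mat_mult_eq_margin_vec_iff[OF n m S] yvec_eq_margin_vec[OF pq(1)]
    by (simp add: x_def N_def T_def)
  then have sol: "sol m n p q S = x" using sol_eq_iff[OF det x] by simp
  have "(\<Sum>k<N. x $ k) = 1"
    using struct_mat_mult_vec_nth[OF x, of "m - 1" S] Ax m n by (simp add: N_def yvec_def)
  moreover have "(\<Sum>l=1..N. x $ (l - 1)) = (\<Sum>k<N. x $ k)"
    using sum.atLeast1_atMost_eq[of "\<lambda>l. x $ (l - 1)" N] by simp
  moreover have "0 \<le> x $ k" if "k < N" for k
    using that P by (simp add: x_def coupling_def split_beta)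
  ultimately have "feasible m n p q S"
    using det by (auto simp: feasible_def prob_vec_def sol N_def)
  moreover have "P_of m n p q S i j = P i j" for i j
  proof (cases "(i, j) \<in> T")
    case True
    from struct_cell_cases[OF S(1) True[unfolded T_def]]
    obtain k where k: "k < N" "(i, j) = struct_cell n S k" using S(2) by (metis N_def)
    then show ?thesis
      using P_of_struct_cell[OF S, of k p q] by (simp add: sol x_def N_def prod_eq_iff split_beta)
  next
    case False
    then have "(i, j) \<notin> support P" using supp by (auto simp: T_def)
    then show ?thesis using False P_of_outside[OF S] by (simp add: T_def support_def)
  qed
  ultimately show ?thesis by blast
qed

lemma P_of_in_coupling:
  assumes n: "1 \<le> n" and m: "1 \<le> m" and pq: "prob_vec m p" "prob_vec n q"
    and S: "S \<subseteq> {1..m * n}" "card S = m + n - 1" and feasible: "feasible m n p q S"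
  shows "P_of m n p q S \<in> coupling m n p q" "support (P_of m n p q S) \<subseteq> phi n ` S"
proof -
  define N where "N = m + n - 1"
  define T where "T = phi n ` S"
  define P where "P = P_of m n p q S"
  have T: "T \<subseteq> {1..m} \<times> {1..n}" using phi_image_subset[OF n S(1)] by (simp add: T_def)
  have det: "det (struct_mat m n S) \<noteq> 0" using feasible by (simp add: feasible_def)
  have P_cells: "case_prod P (struct_cell n S k) = sol m n p q S $ k" if "k < N" for k
    using P_of_struct_cell[OF S, of k p q] that by (simp add: P_def N_def split_beta)
  have "dim_vec (sol m n p q S) = N" using sol_carrier[OF det, of p q] by (simp add: N_def)
  then have "vec N (\<lambda>k. case_prod P (struct_cell n S k)) = sol m n p q S"
    using P_cells by (intro eq_vecI) simp_all
  moreover have "struct_mat m n S *\<^sub>v sol m n p q S = yvec m n p q"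
    using sol_eq_iff[where p = p and q = q and x = "sol m n p q S", OF det sol_carrier[OF det]]
    by simp
  moreover have "(\<Sum>i=1..m. p i) = (\<Sum>j=1..n. q j)" using pq by (simp add: prob_vec_def)
  ultimately have margins: "\<forall>i\<in>{1..m}. (\<Sum>c\<in>{c\<in>T. fst c = i}. case_prod P c) = p i"
      "\<forall>j\<in>{1..n}. (\<Sum>c\<in>{c\<in>T. snd c = j}. case_prod P c) = q j"
    using struct_mat_mult_eq_margin_vec_iff[OF n m S, of p q "case_prod P"]
      yvec_eq_margin_vec[OF pq(1)] by (simp_all add: N_def T_def)
  have supp: "support P \<subseteq> T"
  proof
    fix c assume "c \<in> support P"
    then obtain i j where "c = (i, j)" "P i j \<noteq> 0" by (auto simp: support_def)
    then show "c \<in> T" using P_of_outside[OF S, of i j p q] by (auto simp: P_def T_def)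
  qed
  have "0 \<le> P i j" for i j
  proof (cases "(i, j) \<in> T")
    case True
    from struct_cell_cases[OF S(1) True[unfolded T_def]]
    obtain k where k: "k < N" "(i, j) = struct_cell n S k" using S(2) by (metis N_def)
    have "P i j = sol m n p q S $ (Suc k - 1)"
      using P_cells[OF k(1)] by (simp add: k(2)[symmetric])
    moreover have "Suc k \<in> {1..m + n - 1}" using k(1) by (simp add: N_def)
    then have "0 \<le> sol m n p q S $ (Suc k - 1)"
      using feasible unfolding feasible_def prob_vec_def by blast
    ultimately show ?thesis by simp
  next
    case False
    then have "(i, j) \<notin> support P" using supp by blast
    then show ?thesis by (simp add: support_def)
  qed
  moreover have "\<forall>i j. P i j \<noteq> 0 \<longrightarrow> i \<in> {1..m} \<and> j \<in> {1..n}"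
    using supp T unfolding support_def by blast
  moreover have "\<forall>i\<in>{1..m}. (\<Sum>j=1..n. P i j) = p i" "\<forall>j\<in>{1..n}. (\<Sum>i=1..m. P i j) = q j"
    using margins row_sum_eq_sum_cells[OF T supp] col_sum_eq_sum_cells[OF T supp] by simp_all
  ultimately show "P_of m n p q S \<in> coupling m n p q" unfolding coupling_def P_def by blast
  show "support (P_of m n p q S) \<subseteq> phi n ` S" using supp by (simp add: P_def T_def)
qed

lemma P_of_in_tree_couplings:
  assumes n: "1 \<le> n" and m: "1 \<le> m" and pq: "prob_vec m p" "prob_vec n q"
    and "S \<in> index_sets m n" and feasible: "feasible m n p q S"
  shows "P_of m n p q S \<in> tree_couplings m n p q"
proof -
  have S: "S \<subseteq> {1..m * n}" "card S = m + n - 1" using assms(5) by (auto simp: index_sets_def)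
  have T: "phi n ` S \<subseteq> {1..m} \<times> {1..n}" "card (phi n ` S) = m + n - 1"
    using phi_image_subset[OF n S(1)] card_phi_image[OF S(1)] S(2) by simp_all
  have "det (struct_mat m n S) \<noteq> 0" using feasible by (simp add: feasible_def)
  then have "is_tree (phi n ` S)"
    using det_struct_mat_nonzero_iff[OF n m S] is_tree_if_indep_cells[OF m n T(1) _ T(2)] by simp
  then show ?thesis
    using P_of_in_coupling[OF n m pq S feasible] T unfolding tree_couplings_def by blast
qed

lemma tree_couplings_eq_P_of_feasible:
  assumes n: "1 \<le> n" and m: "1 \<le> m" and pq: "prob_vec m p" "prob_vec n q"
  shows "tree_couplings m n p q = {P_of m n p q S | S. S \<in> index_sets m n \<and> feasible m n p q S}"
proof (intro equalityI subsetI)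
  fix P assume "P \<in> tree_couplings m n p q"
  then obtain T where P: "P \<in> coupling m n p q" and T: "T \<subseteq> {1..m} \<times> {1..n}" "is_tree T"
      "card T = m + n - 1" and supp: "support P \<subseteq> T"
    unfolding tree_couplings_def by blast
  define S where "S = cell_index n ` T"
  have phi_index: "phi n (cell_index n c) = c" if "c \<in> T" for c
    using that T(1) phi_cell_index by blast
  then have inj: "inj_on (cell_index n) T" by (rule inj_on_inverseI)
  have "card S = m + n - 1" using card_image[OF inj] T(3) unfolding S_def by simp
  moreover have "S \<subseteq> {1..m * n}" using T(1) cell_index_in_range unfolding S_def by blast
  ultimately have S: "S \<subseteq> {1..m * n}" "card S = m + n - 1" by simp_all
  have phi_S: "phi n ` S = T"
    unfolding S_def image_image by (subst image_cong[OF refl phi_index]) auto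
  have "det (struct_mat m n S) \<noteq> 0"
    using det_struct_mat_nonzero_iff[OF n m S] indep_cells_if_is_tree[OF T(1,2)] phi_S by simp
  then have "feasible m n p q S \<and> P_of m n p q S = P"
    using feasible_and_P_of_eq_if_coupling[OF n m pq S _ P] supp phi_S by simp
  moreover have "S \<in> index_sets m n" using S by (simp add: index_sets_def)
  ultimately show "P \<in> {P_of m n p q S | S. S \<in> index_sets m n \<and> feasible m n p q S}" by blast
next
  fix P assume "P \<in> {P_of m n p q S | S. S \<in> index_sets m n \<and> feasible m n p q S}"
  then show "P \<in> tree_couplings m n p q" using P_of_in_tree_couplings[OF n m pq] by blast
qed

lemma finite_index_sets: "finite (index_sets m n)"
  by (rule finite_subset[of _ "Pow {1..m * n}"]) (auto simp: index_sets_def)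

lemma INF_coupling_eq_INF_tree_couplings:
  assumes "1 \<le> m" "1 \<le> n" "strictly_concave_on (coupling m n p q) H"
  shows "(INF P\<in>coupling m n p q. ereal (H P)) = (INF P\<in>tree_couplings m n p q. ereal (H P))"
proof (rule antisym)
  show "(INF P\<in>coupling m n p q. ereal (H P)) \<le> (INF P\<in>tree_couplings m n p q. ereal (H P))"
    by (rule INF_mono) (auto simp: tree_couplings_def)
  show "(INF P\<in>tree_couplings m n p q. ereal (H P)) \<le> (INF P\<in>coupling m n p q. ereal (H P))"
    by (rule INF_mono) (use exists_tree_coupling_le[OF assms] in auto)
qed

lemma INF_tree_couplings_eq_Min_H_k:
  assumes trees:
      "tree_couplings m n p q = {P_of m n p q S | S. S \<in> index_sets m n \<and> feasible m n p q S}"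
    and "tree_couplings m n p q \<noteq> {}"
  shows "(INF P\<in>tree_couplings m n p q. ereal (H P)) = Min (H_k m n p q H ` index_sets m n)"
proof (rule antisym)
  have "index_sets m n \<noteq> {}" using assms by auto
  then have "Min (H_k m n p q H ` index_sets m n) \<in> H_k m n p q H ` index_sets m n"
    using finite_index_sets by (intro Min_in) auto
  then obtain S0 where S0: "S0 \<in> index_sets m n"
      "Min (H_k m n p q H ` index_sets m n) = H_k m n p q H S0"
    by auto
  show "(INF P\<in>tree_couplings m n p q. ereal (H P)) \<le> Min (H_k m n p q H ` index_sets m n)"
  proof (cases "feasible m n p q S0")
    case True
    then have "(INF P\<in>tree_couplings m n p q. ereal (H P)) \<le> ereal (H (P_of m n p q S0))"
      using trees S0(1) by (blast intro: INF_lower)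
    moreover have "H_k m n p q H S0 = ereal (H (P_of m n p q S0))" using True by (simp add: H_k_def)
    ultimately show ?thesis by (simp only: S0(2))
  next
    case False
    then have "H_k m n p q H S0 = \<infinity>" by (simp add: H_k_def)
    then show ?thesis by (simp only: S0(2)) simp
  qed
  show "Min (H_k m n p q H ` index_sets m n) \<le> (INF P\<in>tree_couplings m n p q. ereal (H P))"
  proof (rule INF_greatest)
    fix P assume "P \<in> tree_couplings m n p q"
    then obtain S where "S \<in> index_sets m n" "feasible m n p q S" "P = P_of m n p q S"
      using trees by blast
    then have "Min (H_k m n p q H ` index_sets m n) \<le> H_k m n p q H S"
      using finite_index_sets by (intro Min_le) auto
    moreover have "H_k m n p q H S = ereal (H P)"
      using \<open>feasible m n p q S\<close> \<open>P = P_of m n p q S\<close> by (simp add: H_k_def)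
    ultimately show "Min (H_k m n p q H ` index_sets m n) \<le> ereal (H P)" by simp
  qed
qed

theorem theorem3p2:
  fixes m n :: nat and p q :: "nat \<Rightarrow> real" and H :: "rmat \<Rightarrow> real"
  assumes "2 \<le> m" and "2 \<le> n"
    and "prob_vec m p" and "prob_vec n q"
    and "\<forall>i\<in>{1..m}. 0 < p i" and "\<forall>j\<in>{1..n}. 0 < q j"
    and "strictly_concave_on (coupling m n p q) H"
  shows "extreme_points (coupling m n p q) = tree_couplings m n p q \<and>
         tree_couplings m n p q = {P_of m n p q S | S. S \<in> index_sets m n \<and> feasible m n p q S} \<and>
         (INF P\<in>coupling m n p q. ereal (H P)) = (INF P\<in>tree_couplings m n p q. ereal (H P)) \<and>
         (\<exists>P0\<in>tree_couplings m n p q. \<forall>P\<in>tree_couplings m n p q. H P0 \<le> H P) \<and>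
         (INF P\<in>tree_couplings m n p q. ereal (H P)) = Min (H_k m n p q H ` index_sets m n)"
proof -
  have m: "1 \<le> m" and n: "1 \<le> n" using assms(1,2) by simp_all
  note trees = tree_couplings_eq_P_of_feasible[OF n m assms(3,4)]
  have nonempty: "tree_couplings m n p q \<noteq> {}"
    using exists_tree_coupling_le[OF m n assms(7) product_in_coupling[OF assms(3,4)]] by blast
  moreover have "finite (tree_couplings m n p q)"
    unfolding trees using finite_index_sets by simp
  ultimately have "\<exists>P0\<in>tree_couplings m n p q. \<forall>P\<in>tree_couplings m n p q. H P0 \<le> H P"
    using ex_is_arg_min_if_finite[where S = "tree_couplings m n p q" and f = H]
    by (auto simp: is_arg_min_def not_less)
  then show ?thesis
    using extreme_points_coupling_eq_tree_couplings[OF m n] trees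
      INF_coupling_eq_INF_tree_couplings[OF m n assms(7)]
      INF_tree_couplings_eq_Min_H_k[OF trees nonempty]
    by blast
qed

end
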